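(* Let $c>0$, $s_1>s_0\geqslant 2$, let $h$ be a sufficiently regular function and let $v$ be a sufficiently smooth solution in $\mathcal{K}_{[s_0,s_1]}$, vanishing near the light cone $\partial\mathcal{K}=\{r=t-1\}$, of the Klein-Gordon equation \[ \Box v - h\,\partial_t v + c^2 v = f . \] Suppose that $|(t/s)h|\leqslant c$ at every $(t,x)\in\mathcal{K}_{[s_0,s_1]}$, and that there exists a function $S$ with $S(t,x)+(t/s)h(t,x)\leqslant 0$ for all $(t,x)\in\mathcal{K}_{[s_0,s_1]}$ and \[ \int_{\lambda_0}^{s_1}\big|S|_{\gamma_{t,x}}(\lambda)\big|\,d\lambda\leqslant C_S \] with $C_S$ a constant. Then for any $\eta\in\mathbb{R}$ and all $(t,x)\in\mathcal{K}_{[s_0,s_1]}$, \[ (s/t)^{\eta}s^{3/2}\big(|v(t,x)|+(s/t)|\partial v(t,x)|\big)\leqslant C\,V(t,x), \] where $C$ is a constant determined by $(c,C_S,s_0)$, and \[ V(t,x)=\begin{cases} (s/t)^{\eta}\sup_{\mathcal{H}_{s_0}}(|v|+|\partial v|)+(s/t)^{\eta}s^{1/2}|v|_1(t,x)+(s/t)^{\eta}\displaystyle\int_{\lambda_0}^{s}\big|R[h,v]+\tau^{3/2}f\big|\Big|_{\gamma_{t,x}(\tau)}d\tau, & 0\leqslant r/t\leqslant \frac{s_0^2-1}{s_0^2+1},\\[2mm] (s/t)^{\eta}s^{1/2}|v|_1(t,x)+(s/t)^{\eta}\displaystyle\int_{\lambda_0}^{s}\big|R[h,v]+\tau^{3/2}f\big|\Big|_{\gamma_{t,x}(\tau)}d\tau,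 & \frac{s_0^2-1}{s_0^2+1}\leqslant r/t<1, \end{cases} \] with \[ \lambda_0=\begin{cases} s_0, & 0\leqslant r/t\leqslant \frac{s_0^2-1}{s_0^2+1},\\ \sqrt{\frac{t+r}{t-r}}, & \frac{s_0^2-1}{s_0^2+1}\leqslant r/t<1,\end{cases} \] and \[ R[h,v]=s^{3/2}\Big(\frac{x^ax^b}{s^2}\bar\partial_a\bar\partial_b v+\sum_a\bar\partial_a\bar\partial_a v+\frac{3x^a}{s^2}\bar\partial_a v+\frac{3}{4s^2}v\Big)-\frac32 s^{1/2}hv-s^{1/2}(x^a/s)\,h\,L_a v . \]
   Context: Minkowski space $\mathbb{R}^{1+3}$ with coordinates $(t,x)$, $r=|x|$, $\Box=\partial_t^2-\Delta$, $s=\sqrt{t^2-r^2}$. $\mathcal{K}=\{(t,x): r<t-1\}$, $\mathcal{H}_s=\{t=\sqrt{s^2+r^2}\}$, and $\mathcal{K}_{[s_0,s_1]}=\{(t,x): s_0^2\leqslant t^2-r^2\leqslant s_1^2,\ r<t-1\}$. Hyperbolic derivatives: $\bar\partial_a=(x^a/t)\partial_t+\partial_a$ ($a=1,2,3$). Lorentz boosts $L_a=x^a\partial_t+t\partial_a$. $|\partial v|=\max_{\alpha}|\partial_\alpha v|$ over $\alpha\in\{0,1,2,3\}$, and $|v|_1=\max|Zv|$ over all operators $Z$ of order at most $1$ among the identity, $\partial_\alpha$ and $L_a$. The curve $\gamma_{t,x}(\lambda)=(\lambda t/s,\lambda x/s)$ is the ray through the origin passing through $(t,x)$ at $\lambda=s$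 (integral curve of $\bar\partial_s+(x^a/s)\bar\partial_a$ with $\bar\partial_s=(s/t)\partial_t$); quantities with $|_{\gamma_{t,x}(\tau)}$ are evaluated at the point $\gamma_{t,x}(\tau)$, with $s$ there equal to $\tau$. Repeated indices are summed. *)

theory Defs
  imports "HOL-Analysis.Analysis"
begin

type_synonym pt = "real \<times> (real^3)"

definition tco :: "pt \<Rightarrow> real" where "tco p = fst p"
definition xco :: "pt \<Rightarrow> real^3" where "xco p = snd p"
definition rco :: "pt \<Rightarrow> real" where "rco p = norm (snd p)"
definition sco :: "pt \<Rightarrow> real" where "sco p = sqrt ((fst p)^2 - (norm (snd p))^2)"

definition pd :: "(pt \<Rightarrow> real) \<Rightarrow> pt \<Rightarrow> pt \<Rightarrow> real" where
  "pd w e p = deriv (\<lambda>y. w (p + y *\<^sub>R e)) 0"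

definition et :: pt where "et = (1, 0)"
definition ex :: "3 \<Rightarrow> pt" where "ex a = (0, axis a 1)"

definition dt :: "(pt \<Rightarrow> real) \<Rightarrow> pt \<Rightarrow> real" where "dt w = pd w et"
definition dx :: "3 \<Rightarrow> (pt \<Rightarrow> real) \<Rightarrow> pt \<Rightarrow> real" where "dx a w = pd w (ex a)"

definition dbar :: "3 \<Rightarrow> (pt \<Rightarrow> real) \<Rightarrow> pt \<Rightarrow> real" where
  "dbar a w p = (xco p $ a / tco p) * dt w p + dx a w p"
definition Lb :: "3 \<Rightarrow> (pt \<Rightarrow> real) \<Rightarrow> pt \<Rightarrow> real" where
  "Lb a w p = xco p $ a * dt w p + tco p * dx a w p"

definition box :: "(pt \<Rightarrow> real) \<Rightarrow> pt \<Rightarrow> real" where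
  "box w p = dt (dt w) p - (\<Sum>a\<in>UNIV. dx a (dx a w) p)"

definition absD :: "(pt \<Rightarrow> real) \<Rightarrow> pt \<Rightarrow> real" where
  "absD w p = Max ({\<bar>dt w p\<bar>} \<union> (\<lambda>a. \<bar>dx a w p\<bar>) ` UNIV)"

definition abs1 :: "(pt \<Rightarrow> real) \<Rightarrow> pt \<Rightarrow> real" where
  "abs1 w p = Max ({\<bar>w p\<bar>, \<bar>dt w p\<bar>} \<union> (\<lambda>a. \<bar>dx a w p\<bar>) ` UNIV
                   \<union> (\<lambda>a. \<bar>Lb a w p\<bar>) ` UNIV)"

definition C2_on :: "pt set \<Rightarrow> (pt \<Rightarrow> real) \<Rightarrow> bool" where
  "C2_on U w \<longleftrightarrow> open U \<and> w differentiable_on U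
     \<and> (\<forall>e. (\<lambda>p. pd w e p) differentiable_on U)
     \<and> (\<forall>e e'. continuous_on U (\<lambda>p. pd (\<lambda>q. pd w e q) e' p))"

definition Kreg :: "real \<Rightarrow> real \<Rightarrow> pt set" where
  "Kreg s0 s1 = {(t, x). s0^2 \<le> t^2 - (norm x)^2 \<and> t^2 - (norm x)^2 \<le> s1^2 \<and> norm x < t - 1}"

definition HypK :: "real \<Rightarrow> pt set" where
  "HypK s = {(t, x). t = sqrt (s^2 + (norm x)^2) \<and> norm x < t - 1}"

definition gam :: "pt \<Rightarrow> real \<Rightarrow> pt" where
  "gam p l = (l / sco p) *\<^sub>R p"

definition lam0 :: "real \<Rightarrow> pt \<Rightarrow> real" where
  "lam0 s0 p = (if rco p / tco p \<le> (s0^2 - 1) / (s0^2 + 1) then s0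
               else sqrt ((tco p + rco p) / (tco p - rco p)))"

definition Rhv :: "(pt \<Rightarrow> real) \<Rightarrow> (pt \<Rightarrow> real) \<Rightarrow> pt \<Rightarrow> real" where
  "Rhv h v p = (let s = sco p; x = xco p in
     s powr (3/2) * ((\<Sum>a\<in>UNIV. \<Sum>b\<in>UNIV. x$a * x$b / s^2 * dbar a (dbar b v) p)
        + (\<Sum>a\<in>UNIV. dbar a (dbar a v) p)
        + (\<Sum>a\<in>UNIV. 3 * x$a / s^2 * dbar a v p)
        + 3 / (4 * s^2) * v p)
     - 3/2 * s powr (1/2) * h p * v p
     - s powr (1/2) * (\<Sum>a\<in>UNIV. (x$a / s) * h p * Lb a v p))"

definition Vbd :: "real \<Rightarrow> real \<Rightarrow> (pt \<Rightarrow> real) \<Rightarrow> (pt \<Rightarrow> real) \<Rightarrow> (pt \<Rightarrow> real) \<Rightarrow> pt \<Rightarrow> real" where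
  "Vbd s0 eta h v f p = (let s = sco p; t = tco p; w = (s / t) powr eta;
     I = integral {lam0 s0 p .. s}
           (\<lambda>\<tau>. \<bar>Rhv h v (gam p \<tau>) + \<tau> powr (3/2) * f (gam p \<tau>)\<bar>)
   in (if rco p / tco p \<le> (s0^2 - 1) / (s0^2 + 1)
       then w * (SUP q\<in>HypK s0. \<bar>v q\<bar> + absD v q) + w * s powr (1/2) * abs1 v p + w * I
       else w * s powr (1/2) * abs1 v p + w * I))"

end

theory Submission
  imports Defs
begin

(* Along the ray gamma through the origin and a point p of K, the hyperbolic time s is the ray
   parameter tau, and the rescaled profile w(tau) = tau^(3/2) v(gamma(tau)) satisfies the damped
   Klein-Gordon equation
     w'' - (t/s) h w' + c^2 w + (3/2) (t/s - 1) h w / tau = R[h,v] + tau^(3/2) f,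
   because the wave operator splits into d_s^2 + (3/s) d_s and derivatives tangent to the
   hyperboloids H_s.  A Groenwall argument for the energy sqrt(w'^2 + c^2 w^2) shows that only the
   positive part of the damping (t/s) h <= -S can make it grow, and the integral of |S| along the
   ray is at most C_S.  The ray enters K either through H_s0, where the energy is controlled by the
   initial data, or through the light cone, near which v vanishes.  Finally d_t v and d_a v at p are
   recovered from w' and the boosts L_a v, at the price of the term s^(1/2) |v|_1. *)

section \<open>Directional derivatives\<close>

lemma has_real_derivative_along_line:
  fixes f :: "'a::real_normed_vector \<Rightarrow> real"
  assumes "(f has_derivative F) (at q)"
  shows "((\<lambda>y. f (q + y *\<^sub>R e)) has_real_derivative F e) (at 0)"
proof -
  have line: "((\<lambda>y::real. q + y *\<^sub>R e) has_derivative (\<lambda>y. y *\<^sub>R e)) (at 0)"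
    by (auto intro!: derivative_eq_intros)
  have "((\<lambda>y. f (q + y *\<^sub>R e)) has_derivative (\<lambda>y. F (y *\<^sub>R e))) (at 0)"
    using has_derivative_compose[OF line, of f F] assms by simp
  moreover have "(\<lambda>y. F (y *\<^sub>R e)) = (\<lambda>y. F e * y)"
    using linear_scale[OF has_derivative_linear[OF assms]] by (simp add: mult.commute)
  ultimately show ?thesis
    by (simp add: has_field_derivative_def)
qed

lemma pd_eq_frechet_derivative:
  assumes "f differentiable (at q)"
  shows "pd f e q = frechet_derivative f (at q) e"
  unfolding pd_def
  by (rule DERIV_imp_deriv, rule has_real_derivative_along_line)
     (use assms frechet_derivative_works in blast)

lemma has_real_derivative_pd:
  assumes "f differentiable (at q)"
  shows "((\<lambda>y. f (q + y *\<^sub>R e)) has_real_derivative pd f e q) (at 0)"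
  unfolding pd_eq_frechet_derivative[OF assms]
  by (rule has_real_derivative_along_line) (use assms frechet_derivative_works in blast)

lemma has_real_derivative_pd_ray:
  assumes "f differentiable (at (\<tau> *\<^sub>R e))"
  shows "((\<lambda>\<tau>. f (\<tau> *\<^sub>R e)) has_real_derivative pd f e (\<tau> *\<^sub>R e)) (at \<tau>)"
proof -
  have "((\<lambda>y. f ((\<tau> + y) *\<^sub>R e)) has_real_derivative pd f e (\<tau> *\<^sub>R e)) (at 0)"
    using has_real_derivative_pd[OF assms] by (simp add: scaleR_add_left)
  then show ?thesis
    using DERIV_shift[of "\<lambda>u. f (u *\<^sub>R e)" "pd f e (\<tau> *\<^sub>R e)" 0 \<tau>] by (simp add: add.commute)
qed

lemma has_real_derivative_locally_zero:
  assumes "(f has_real_derivative D) (at x)" "a < x" "x < b" "\<And>y. a < y \<Longrightarrow> y < b \<Longrightarrow> f y = 0"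
  shows "D = 0"
proof -
  have ev: "\<forall>\<^sub>F y in nhds x. f y = (\<lambda>_. 0) y"
    using eventually_nhds_in_open[of "{a<..<b}" x] assms(2-4) by (auto elim!: eventually_mono)
  then have "((\<lambda>_. 0) has_real_derivative D) (at x)"
    using DERIV_cong_ev[OF refl ev refl] assms(1) by blast
  then show ?thesis using DERIV_const DERIV_unique by blast
qed

lemma pd_cong_open:
  assumes "open U" "q \<in> U" "\<And>y. y \<in> U \<Longrightarrow> f y = g y"
  shows "pd f e q = pd g e q"
  unfolding pd_def
proof (rule deriv_cong_ev)
  have "\<forall>\<^sub>F y in nhds 0. y \<in> (\<lambda>y::real. q + y *\<^sub>R e) -` U"
    by (rule eventually_nhds_in_open, rule open_vimage[OF assms(1)])
       (use assms(2) in \<open>auto intro!: continuous_intros\<close>)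
  then show "\<forall>\<^sub>F y in nhds 0. f (q + y *\<^sub>R e) = g (q + y *\<^sub>R e)"
    by eventually_elim (use assms(3) in auto)
qed auto

lemma pt_eq_sum_basis: "(e::pt) = fst e *\<^sub>R et + (\<Sum>a\<in>UNIV. (snd e $ a) *\<^sub>R ex a)"
proof -
  have "snd (\<Sum>a\<in>UNIV. (snd e $ a) *\<^sub>R ex a) = snd e"
    using basis_expansion[of "snd e"] by (simp add: snd_sum ex_def scalar_mult_eq_scaleR)
  moreover have "fst (\<Sum>a\<in>UNIV. (snd e $ a) *\<^sub>R ex a) = 0"
    by (simp add: fst_sum ex_def)
  ultimately show ?thesis by (intro prod_eqI) (simp_all add: et_def)
qed

lemma pd_eq_sum_partials:
  assumes "f differentiable (at q)"
  shows "pd f e q = fst e * dt f q + (\<Sum>a\<in>UNIV. snd e $ a * dx a f q)"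
proof -
  let ?F = "frechet_derivative f (at q)"
  have lin: "linear ?F"
    using assms frechet_derivative_works has_derivative_linear by blast
  have "?F e = ?F (fst e *\<^sub>R et + (\<Sum>a\<in>UNIV. (snd e $ a) *\<^sub>R ex a))"
    using pt_eq_sum_basis by metis
  also have "\<dots> = fst e * ?F et + (\<Sum>a\<in>UNIV. snd e $ a * ?F (ex a))"
    using lin by (simp add: linear_add linear_sum linear_scale)
  finally show ?thesis
    using assms by (simp add: pd_eq_frechet_derivative dt_def dx_def)
qed

lemma pd_pd_eq_sum_partials:
  assumes "open U" "q \<in> U" "\<And>y. y \<in> U \<Longrightarrow> v differentiable (at y)"
    and "dt v differentiable (at q)" "\<And>a. dx a v differentiable (at q)"
  shows "pd (pd v e) e q = fst e * (fst e * dt (dt v) q + (\<Sum>b\<in>UNIV. snd e $ b * dx b (dt v) q))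
     + (\<Sum>a\<in>UNIV. snd e $ a * (fst e * dt (dx a v) q + (\<Sum>b\<in>UNIV. snd e $ b * dx b (dx a v) q)))"
proof -
  have "pd (pd v e) e q = pd (\<lambda>y. fst e * dt v y + (\<Sum>a\<in>UNIV. snd e $ a * dx a v y)) e q"
    by (rule pd_cong_open[OF assms(1,2)]) (simp add: pd_eq_sum_partials assms(3))
  also have "\<dots> = fst e * pd (dt v) e q + (\<Sum>a\<in>UNIV. snd e $ a * pd (dx a v) e q)"
    unfolding pd_def[of "\<lambda>y. _ y + _ y"]
    by (intro DERIV_imp_deriv DERIV_add DERIV_cmult DERIV_sum has_real_derivative_pd assms(4,5))
  finally show ?thesis
    using pd_eq_sum_partials[OF assms(4)] pd_eq_sum_partials[OF assms(5)] by simp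
qed

lemma pd_dbar:
  assumes "dt v differentiable (at q)" "dx b v differentiable (at q)" "tco q \<noteq> 0"
  shows "pd (dbar b v) e q = ((snd e $ b * tco q - xco q $ b * fst e) / (tco q)^2) * dt v q
            + (xco q $ b / tco q) * pd (dt v) e q + pd (dx b v) e q"
proof -
  have coeff: "((\<lambda>y. (xco q $ b + y * snd e $ b) / (tco q + y * fst e)) has_real_derivative
        (snd e $ b * tco q - xco q $ b * fst e) / (tco q)^2) (at 0)"
    using assms(3) by (auto intro!: derivative_eq_intros simp: field_simps power2_eq_square)
  have "(\<lambda>y. dbar b v (q + y *\<^sub>R e)) = (\<lambda>y. (xco q $ b + y * snd e $ b) / (tco q + y * fst e)
       * dt v (q + y *\<^sub>R e) + dx b v (q + y *\<^sub>R e))"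
    by (auto simp: dbar_def xco_def tco_def)
  then have "((\<lambda>y. dbar b v (q + y *\<^sub>R e)) has_real_derivative
      ((snd e $ b * tco q - xco q $ b * fst e) / (tco q)^2) * dt v q
      + (xco q $ b / tco q) * pd (dt v) e q + pd (dx b v) e q) (at 0)"
    using DERIV_add[OF DERIV_mult[OF coeff has_real_derivative_pd[OF assms(1)]]
        has_real_derivative_pd[OF assms(2)]]
    by (simp add: mult.commute)
  then show ?thesis
    unfolding pd_def[of "dbar b v"] by (rule DERIV_imp_deriv)
qed

lemma dbar_dbar_eq:
  assumes "dt v differentiable (at q)" "dx b v differentiable (at q)" "tco q \<noteq> 0"
  shows "dbar a (dbar b v) q = (xco q $ a / tco q) * (- xco q $ b / (tco q)^2 * dt v q
       + (xco q $ b / tco q) * dt (dt v) q + dt (dx b v) q)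
       + ((if a = b then 1 else 0) / tco q) * dt v q + (xco q $ b / tco q) * dx a (dt v) q
       + dx a (dx b v) q"
proof -
  have "dt (dbar b v) q = - xco q $ b / (tco q)^2 * dt v q
       + (xco q $ b / tco q) * dt (dt v) q + dt (dx b v) q"
    using pd_dbar[OF assms, of et] by (simp add: et_def dt_def)
  moreover have "dx a (dbar b v) q = ((if a = b then 1 else 0) / tco q) * dt v q
       + (xco q $ b / tco q) * dx a (dt v) q + dx a (dx b v) q"
    using pd_dbar[OF assms, of "ex a"] assms(3)
    by (simp add: ex_def dx_def axis_def power2_eq_square)
  ultimately show ?thesis
    unfolding dbar_def[of a "dbar b v"] by simp
qed

lemma C2_onD:
  assumes "C2_on U v"
  shows "open U" "\<And>y. y \<in> U \<Longrightarrow> v differentiable (at y)"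
    "\<And>y e. y \<in> U \<Longrightarrow> pd v e differentiable (at y)"
    "continuous_on U v" "\<And>e. continuous_on U (pd v e)" "\<And>e e'. continuous_on U (pd (pd v e) e')"
  using assms
  by (auto simp: C2_on_def differentiable_on_eq_differentiable_at intro: differentiable_imp_continuous_on)

lemma absD_ge: "\<bar>dt w q\<bar> \<le> absD w q" "\<bar>dx a w q\<bar> \<le> absD w q"
  unfolding absD_def by (rule Max_ge; auto)+

lemma absD_le_sum: "absD w q \<le> \<bar>dt w q\<bar> + (\<Sum>a\<in>UNIV. \<bar>dx a w q\<bar>)"
proof -
  have "\<bar>dx a w q\<bar> \<le> \<bar>dt w q\<bar> + (\<Sum>a\<in>UNIV. \<bar>dx a w q\<bar>)" for a
    using member_le_sum[of a UNIV "\<lambda>a. \<bar>dx a w q\<bar>"] by simp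
  then show ?thesis unfolding absD_def by (subst Max_le_iff) (auto intro: sum_nonneg)
qed

lemma abs1_ge: "\<bar>w q\<bar> \<le> abs1 w q" "\<bar>Lb a w q\<bar> \<le> abs1 w q"
  unfolding abs1_def by (rule Max_ge; auto)+

lemma abs_pd_le_absD:
  assumes "v differentiable (at q)"
  shows "\<bar>pd v e q\<bar> \<le> 4 * norm e * absD v q"
proof -
  have norms: "\<bar>fst e\<bar> \<le> norm e" "norm (snd e) \<le> norm e"
    using norm_fst_le[of "fst e" "snd e"] norm_snd_le[of "snd e" "fst e"] by simp_all
  then have "\<bar>fst e * dt v q\<bar> \<le> norm e * absD v q"
    unfolding abs_mult by (intro mult_mono absD_ge) auto
  moreover have "\<bar>snd e $ a * dx a v q\<bar> \<le> norm e * absD v q" for a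
    unfolding abs_mult
    by (intro mult_mono order_trans[OF component_le_norm_cart norms(2)] absD_ge) auto
  then have "(\<Sum>a\<in>UNIV. \<bar>snd e $ a * dx a v q\<bar>) \<le> (\<Sum>a\<in>(UNIV::3 set). norm e * absD v q)"
    by (intro sum_mono)
  from order_trans[OF sum_abs this]
  have "\<bar>\<Sum>a\<in>UNIV. snd e $ a * dx a v q\<bar> \<le> 3 * (norm e * absD v q)" by simp
  ultimately show ?thesis
    unfolding pd_eq_sum_partials[OF assms]
    using abs_triangle_ineq[of "fst e * dt v q" "\<Sum>a\<in>UNIV. snd e $ a * dx a v q"] by linarith
qed

lemma absD_le_boosts:
  assumes "tco p > 0" "rco p \<le> tco p"
  shows "absD v p \<le> abs1 v p / tco p + \<bar>dt v p\<bar>"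
proof -
  have "abs1 v p \<ge> 0" using abs1_ge(1)[of v p] by simp
  moreover have "\<bar>dx a v p\<bar> \<le> abs1 v p / tco p + \<bar>dt v p\<bar>" for a
  proof -
    have "\<bar>xco p $ a\<bar> \<le> tco p"
      using component_le_norm_cart[of "xco p" a] assms(2) by (simp add: rco_def xco_def)
    then have "\<bar>xco p $ a * dt v p\<bar> \<le> tco p * \<bar>dt v p\<bar>"
      by (simp add: abs_mult mult_right_mono)
    moreover have "tco p * \<bar>dx a v p\<bar> = \<bar>Lb a v p - xco p $ a * dt v p\<bar>"
      using assms(1) by (simp add: Lb_def abs_mult)
    ultimately have "tco p * \<bar>dx a v p\<bar> \<le> \<bar>Lb a v p\<bar> + tco p * \<bar>dt v p\<bar>"
      using abs_triangle_ineq4[of "Lb a v p" "xco p $ a * dt v p"] by linarith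
    then have "tco p * \<bar>dx a v p\<bar> \<le> abs1 v p + tco p * \<bar>dt v p\<bar>"
      using abs1_ge(2)[of a v p] by linarith
    then show ?thesis using assms(1) by (simp add: field_simps)
  qed
  ultimately show ?thesis
    unfolding absD_def using assms(1) by (subst Max_le_iff) auto
qed

section \<open>Rays through the origin and the region K\<close>

lemma sco_sq:
  assumes "sco q > 0"
  shows "(sco q)^2 = (tco q)^2 - (rco q)^2"
proof -
  have "fst q^2 - (norm (snd q))^2 > 0" using assms by (simp add: sco_def)
  then show ?thesis by (simp add: sco_def tco_def rco_def)
qed

lemma sco_sq_coords:
  assumes "sco q > 0"
  shows "(sco q)^2 = (tco q)^2 - ((xco q$1)^2 + (xco q$2)^2 + (xco q$3)^2)"
proof -
  have "(rco q)^2 = inner (xco q) (xco q)" by (simp add: rco_def xco_def power2_norm_eq_inner)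
  then show ?thesis
    using sco_sq[OF assms] by (simp add: inner_vec_def sum_3 power2_eq_square)
qed

lemma Kreg_coords:
  assumes "p \<in> Kreg s0 s1" "0 < s0" "s0 \<le> s1"
  shows "rco p < tco p - 1" "0 \<le> rco p" "1 < tco p" "s0 \<le> sco p" "0 < sco p" "sco p \<le> s1"
    "sco p \<le> tco p" "(sco p)^2 = (tco p)^2 - (rco p)^2"
proof -
  have K: "s0^2 \<le> (tco p)^2 - (rco p)^2" "(tco p)^2 - (rco p)^2 \<le> s1^2" "rco p < tco p - 1"
    using assms(1) by (auto simp: Kreg_def tco_def rco_def split: prod.splits)
  have s: "sco p = sqrt ((tco p)^2 - (rco p)^2)" by (simp add: sco_def tco_def rco_def)
  show "rco p < tco p - 1" "0 \<le> rco p" by (fact K(3)) (simp add: rco_def)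
  then show "1 < tco p" by simp
  show "s0 \<le> sco p" unfolding s using real_sqrt_le_mono[OF K(1)] assms(2) by simp
  then show "0 < sco p" using assms(2) by simp
  show "sco p \<le> s1" unfolding s using real_sqrt_le_mono[OF K(2)] assms(2,3) by simp
  have "sqrt ((tco p)^2 - (rco p)^2) \<le> sqrt ((tco p)^2)" by (rule real_sqrt_le_mono) simp
  then show "sco p \<le> tco p" unfolding s using \<open>1 < tco p\<close> by simp
  have "0 \<le> (tco p)^2 - (rco p)^2" using order_trans[OF zero_le_power2 K(1)] .
  then show "(sco p)^2 = (tco p)^2 - (rco p)^2" unfolding s by simp
qed

definition ray_dir :: "pt \<Rightarrow> pt" where
  "ray_dir p = (1 / sco p) *\<^sub>R p"

lemma gam_coords:
  assumes "sco p > 0" "\<tau> > 0"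
  shows "gam p \<tau> = \<tau> *\<^sub>R ray_dir p" "tco (gam p \<tau>) = \<tau> * tco p / sco p"
    "rco (gam p \<tau>) = \<tau> * rco p / sco p" "sco (gam p \<tau>) = \<tau>" "ray_dir (gam p \<tau>) = ray_dir p"
    "tco (gam p \<tau>) - rco (gam p \<tau>) = \<tau> * (tco p - rco p) / sco p"
proof -
  show "gam p \<tau> = \<tau> *\<^sub>R ray_dir p" by (simp add: gam_def ray_dir_def)
  show t: "tco (gam p \<tau>) = \<tau> * tco p / sco p" by (simp add: gam_def tco_def)
  show r: "rco (gam p \<tau>) = \<tau> * rco p / sco p" using assms by (simp add: gam_def rco_def)
  then show "tco (gam p \<tau>) - rco (gam p \<tau>) = \<tau> * (tco p - rco p) / sco p"
    using t by (simp add: diff_divide_distrib right_diff_distrib)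
  have "sco (gam p \<tau>) = sqrt ((tco (gam p \<tau>))^2 - (rco (gam p \<tau>))^2)"
    by (simp add: sco_def tco_def rco_def)
  also have "\<dots> = sqrt ((\<tau> / sco p)^2 * ((tco p)^2 - (rco p)^2))"
    unfolding t r by (simp add: power_divide power_mult_distrib diff_divide_distrib right_diff_distrib)
  also have "\<dots> = \<tau>" using assms by (simp add: sco_sq[OF assms(1), symmetric] real_sqrt_mult)
  finally show "sco (gam p \<tau>) = \<tau>" .
  then show "ray_dir (gam p \<tau>) = ray_dir p" using assms by (simp add: ray_dir_def gam_def)
qed

(* The ray through p crosses the light cone r = t - 1 at the parameter cone_param p. *)
definition cone_param :: "pt \<Rightarrow> real" where
  "cone_param p = sco p / (tco p - rco p)"

lemma cone_param_bounds:
  assumes "p \<in> Kreg s0 s1" "0 < s0" "s0 \<le> s1"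
  shows "0 < cone_param p" "cone_param p < sco p"
proof -
  note K = Kreg_coords[OF assms]
  have "sco p * 1 < sco p * (tco p - rco p)" using K by (intro mult_strict_left_mono) auto
  then show "0 < cone_param p" "cone_param p < sco p"
    using K by (simp_all add: cone_param_def divide_less_eq)
qed

lemma norm_ray_dir_le_cone_param:
  assumes "0 < sco p" "(sco p)^2 = (tco p)^2 - (rco p)^2" "0 \<le> rco p" "rco p < tco p"
  shows "norm (ray_dir p) \<le> cone_param p"
proof -
  have "0 \<le> tco p" using assms(3,4) by linarith
  then have "norm p \<le> tco p + rco p"
    using norm_Pair_le[of "fst p" "snd p"] by (simp add: tco_def rco_def)
  then have "norm (ray_dir p) \<le> (tco p + rco p) / sco p"
    using assms(1) by (simp add: ray_dir_def divide_right_mono)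
  also have "\<dots> = cone_param p"
    using assms by (simp add: cone_param_def field_simps power2_eq_square)
  finally show ?thesis .
qed

lemma lam0_eq_max:
  assumes "p \<in> Kreg s0 s1" "0 < s0" "s0 \<le> s1"
  shows "rco p / tco p \<le> (s0^2 - 1) / (s0^2 + 1) \<longleftrightarrow> cone_param p \<le> s0"
    and "lam0 s0 p = max s0 (cone_param p)"
proof -
  note K = Kreg_coords[OF assms]
  define t r l where "t = tco p" and "r = rco p" and "l = cone_param p"
  have tr: "1 < t - r" "0 \<le> r" "0 < t" using K by (simp_all add: t_def r_def)
  have l_pos: "0 < l" using K by (simp add: l_def cone_param_def)
  have "(sco p)^2 = (t - r) * (t + r)" using K(8) by (simp add: t_def r_def algebra_simps power2_eq_square)
  then have l_sq: "l^2 = (t + r) / (t - r)"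
    using tr by (simp add: l_def cone_param_def t_def r_def power_divide power2_eq_square)
  have "r / t \<le> (s0^2 - 1) / (s0^2 + 1) \<longleftrightarrow> t + r \<le> s0^2 * (t - r)"
    using tr by (simp add: field_simps add_pos_nonneg)
  also have "\<dots> \<longleftrightarrow> l^2 \<le> s0^2" using tr by (simp add: l_sq divide_le_eq mult.commute)
  also have "\<dots> \<longleftrightarrow> l \<le> s0" using l_pos assms(2) by (simp add: power2_le_iff_abs_le)
  finally show cond: "rco p / tco p \<le> (s0^2 - 1) / (s0^2 + 1) \<longleftrightarrow> cone_param p \<le> s0"
    by (simp add: t_def r_def l_def)
  have "sqrt ((t + r) / (t - r)) = l" using l_sq l_pos by (metis less_eq_real_def real_sqrt_unique)
  then show "lam0 s0 p = max s0 (cone_param p)"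
    unfolding lam0_def cond by (simp add: t_def r_def l_def)
qed

lemma gam_in_Kreg:
  assumes "p \<in> Kreg s0 s1" "0 < s0" "s0 \<le> s1"
    and "s0 \<le> \<tau>" "\<tau> \<le> sco p" "cone_param p < \<tau>"
  shows "gam p \<tau> \<in> Kreg s0 s1"
proof -
  note K = Kreg_coords[OF assms(1-3)]
  have "\<tau> > 0" using assms by simp
  note G = gam_coords[OF K(5) this]
  have "(tco (gam p \<tau>))^2 - (rco (gam p \<tau>))^2 = \<tau>^2"
    using sco_sq[of "gam p \<tau>"] G(4) \<open>\<tau> > 0\<close> by simp
  moreover have "s0^2 \<le> \<tau>^2" "\<tau>^2 \<le> s1^2" using assms K by (auto intro!: power_mono)
  moreover have "1 < tco (gam p \<tau>) - rco (gam p \<tau>)"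
    unfolding G(6) using assms(6) K by (simp add: cone_param_def field_simps)
  ultimately show ?thesis
    by (auto simp: Kreg_def tco_def rco_def split: prod.splits)
qed

lemma HypK_subset_Kreg:
  assumes "0 \<le> s0" "s0 \<le> s1"
  shows "HypK s0 \<subseteq> Kreg s0 s1"
  using assms power_mono[of s0 s1 2] by (auto simp: HypK_def Kreg_def)

lemma gam_in_HypK:
  assumes "p \<in> Kreg s0 s1" "0 < s0" "s0 \<le> s1" "cone_param p < s0"
  shows "gam p s0 \<in> HypK s0"
proof -
  note K = Kreg_coords[OF assms(1-3)]
  have q: "gam p s0 \<in> Kreg s0 s1" using gam_in_Kreg[OF assms(1-3)] assms K by simp
  have "sco (gam p s0) = s0" by (rule gam_coords(4)[OF K(5) assms(2)])
  then have "tco (gam p s0) = sqrt (s0^2 + (rco (gam p s0))^2)"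
    using Kreg_coords[OF q assms(2,3)] by (simp add: real_sqrt_unique)
  then show ?thesis
    using Kreg_coords(1)[OF q assms(2,3)] by (auto simp: HypK_def tco_def rco_def split: prod.splits)
qed

lemma compact_hyperboloid_away_from_cone:
  assumes "0 < \<kappa>"
  shows "compact {q::pt. fst q = sqrt (s^2 + (norm (snd q))^2) \<and> \<kappa> \<le> fst q - norm (snd q)}"
    (is "compact ?K")
proof (rule compact_eq_bounded_closed[THEN iffD2, OF conjI])
  show "closed ?K"
    by (intro closed_Collect_conj closed_Collect_eq closed_Collect_le continuous_intros)
  show "bounded ?K"
    unfolding bounded_iff
  proof (intro exI ballI)
    fix q assume "q \<in> ?K"
    define t r where "t = fst q" and "r = norm (snd q)"
    have tr: "t^2 = s^2 + r^2" "\<kappa> \<le> t - r" "0 \<le> r"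
      using \<open>q \<in> ?K\<close> by (auto simp: t_def r_def)
    have "(t - r) * (t + r) = s^2" using tr(1) by (simp add: algebra_simps power2_eq_square)
    moreover have "\<kappa> * (t + r) \<le> (t - r) * (t + r)"
      by (rule mult_right_mono) (use tr assms in auto)
    ultimately have "t + r \<le> s^2 / \<kappa>" using assms by (simp add: field_simps)
    moreover have "norm q \<le> \<bar>t\<bar> + r" using norm_Pair_le[of t "snd q"] by (simp add: t_def r_def)
    ultimately show "norm q \<le> s^2 / \<kappa>" using tr assms by simp
  qed
qed

definition cone_layer :: "real \<Rightarrow> real \<Rightarrow> real \<Rightarrow> pt set" where
  "cone_layer s0 s1 \<delta> = {q. s0^2 < (fst q)^2 - (norm (snd q))^2 \<and> (fst q)^2 - (norm (snd q))^2 < s1^2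
     \<and> norm (snd q) < fst q - 1 \<and> fst q - 1 - \<delta> < norm (snd q)}"

lemma open_cone_layer: "open (cone_layer s0 s1 \<delta>)"
  unfolding cone_layer_def by (intro open_Collect_conj open_Collect_less continuous_intros)

lemma cone_layer_subset_Kreg: "cone_layer s0 s1 \<delta> \<subseteq> Kreg s0 s1"
  by (auto simp: cone_layer_def Kreg_def)

lemma eventually_time_shift_in_cone_layer:
  assumes "q \<in> HypK s0" "tco q - rco q < 1 + \<delta>/2" "0 < \<delta>" "0 \<le> s0" "s0 < s1"
  shows "\<forall>\<^sub>F y in at_right 0. q + y *\<^sub>R et \<in> cone_layer s0 s1 \<delta>"
proof -
  define t r where "t = fst q" and "r = norm (snd q)"
  have q: "t^2 - r^2 = s0^2" "r < t - 1" "t - r < 1 + \<delta>/2" "0 \<le> r"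
    using assms(1,2) by (auto simp: HypK_def t_def r_def tco_def rco_def split: prod.splits)
  have "s0^2 < s1^2" using assms(4,5) by (simp add: power_strict_mono)
  have "((\<lambda>y. (t + y)^2 - r^2) \<longlongrightarrow> t^2 - r^2) (at_right 0)"
    "((\<lambda>y. t + y - 1 - \<delta>) \<longlongrightarrow> t - 1 - \<delta>) (at_right 0)"
    by (auto intro!: tendsto_eq_intros)
  then have "\<forall>\<^sub>F y in at_right 0. (t + y)^2 - r^2 < s1^2 \<and> t + y - 1 - \<delta> < r"
    using q \<open>s0^2 < s1^2\<close> assms(3) by (auto intro!: eventually_conj order_tendstoD(2))
  moreover have "\<forall>\<^sub>F y in at_right 0. (0::real) < y" by (rule eventually_at_right_less)
  ultimately show ?thesis
  proof eventually_elim
    case (elim y)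
    have "0 < t" using q(2,4) by linarith
    then have "t^2 < (t + y)^2" using elim by (simp add: power_strict_mono)
    then show ?case using elim q by (simp add: cone_layer_def et_def t_def r_def)
  qed
qed

section \<open>The Klein-Gordon operator along a ray\<close>

lemma powr_halves:
  assumes "(\<tau>::real) > 0"
  shows "\<tau> powr (1/2) = sqrt \<tau>" "\<tau> powr (3/2) = \<tau> * sqrt \<tau>" "\<tau> powr (-1/2) = inverse (sqrt \<tau>)"
proof -
  show half: "\<tau> powr (1/2) = sqrt \<tau>" using assms by (simp add: powr_half_sqrt)
  have "\<tau> powr (3/2) = \<tau> powr (1 + 1/2)" by simp
  also have "\<dots> = \<tau> powr 1 * \<tau> powr (1/2)" by (rule powr_add)
  also have "\<dots> = \<tau> * \<tau> powr (1/2)" using assms by simp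
  finally show "\<tau> powr (3/2) = \<tau> * sqrt \<tau>" using half by simp
  have "\<tau> powr (-1/2) = \<tau> powr (- (1/2))" by simp
  also have "\<dots> = inverse (\<tau> powr (1/2))" by (simp add: powr_minus)
  finally show "\<tau> powr (-1/2) = inverse (sqrt \<tau>)" using half by simp
qed

lemma box_hyperbolic_decomposition:
  assumes "open U" "q \<in> U" "\<And>y. y \<in> U \<Longrightarrow> v differentiable (at y)"
    and "dt v differentiable (at q)" "\<And>a. dx a v differentiable (at q)" "tco q > 0" "sco q > 0"
  shows "pd (pd v (ray_dir q)) (ray_dir q) q + 3 / sco q * pd v (ray_dir q) q
    = box v q + (\<Sum>a\<in>UNIV. \<Sum>b\<in>UNIV. xco q$a * xco q$b / (sco q)^2 * dbar a (dbar b v) q)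
        + (\<Sum>a\<in>UNIV. dbar a (dbar a v) q)
        + (\<Sum>a\<in>UNIV. 3 * xco q$a / (sco q)^2 * dbar a v q)"
proof -
  define t where "t = tco q"
  define \<tau> where "\<tau> = sco q"
  have tau2: "\<tau>^2 = t^2 - ((xco q$1)^2 + (xco q$2)^2 + (xco q$3)^2)"
    using sco_sq_coords[OF assms(7)] by (simp add: t_def \<tau>_def)
  have dbar2: "dbar a (dbar b v) q = (xco q $ a / t) * (- xco q $ b / t^2 * dt v q
       + (xco q $ b / t) * dt (dt v) q + dt (dx b v) q)
       + ((if a = b then 1 else 0) / t) * dt v q + (xco q $ b / t) * dx a (dt v) q
       + dx a (dx b v) q" for a b
    unfolding t_def using dbar_dbar_eq assms(4,5,6) by (metis less_irrefl)
  define A where "A = inverse t"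
  define T where "T = inverse \<tau>"
  have inv: "A * t = 1" "T * \<tau> = 1" using assms(6,7) by (auto simp: A_def T_def t_def \<tau>_def)
  have inv2: "inverse (\<tau>^2) = T^2" "inverse (t^2) = A^2" by (simp_all add: A_def T_def power_inverse)
  have fq: "fst q = t" "snd q = xco q" by (simp_all add: t_def tco_def xco_def)
  show ?thesis
    apply (simp add: pd_pd_eq_sum_partials[OF assms(1-5)] pd_eq_sum_partials[OF assms(3)[OF assms(2)]]
        dbar2 sum_3 box_def dbar_def[of _ v] fq ray_dir_def flip: \<tau>_def t_def)
    apply (simp only: divide_inverse inv2 flip: A_def T_def)
    using inv tau2 by algebra
qed

lemma dt_eq_radial_minus_boosts:
  assumes "v differentiable (at p)" "tco p > 0" "sco p > 0"
  shows "dt v p = (tco p / sco p) * pd v (ray_dir p) p - (\<Sum>a\<in>UNIV. xco p$a * Lb a v p) / (sco p)^2"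
proof -
  define t where "t = tco p"
  define s where "s = sco p"
  have fq: "fst p = t" "snd p = xco p" by (simp_all add: t_def tco_def xco_def)
  have radial: "pd v (ray_dir p) p
      = (t * dt v p + (xco p$1 * dx 1 v p + xco p$2 * dx 2 v p + xco p$3 * dx 3 v p)) / s"
    using pd_eq_sum_partials[OF assms(1)]
    by (simp add: sum_3 fq ray_dir_def flip: s_def) (simp add: add_divide_distrib)
  have boosts: "(\<Sum>a\<in>UNIV. xco p$a * Lb a v p) = xco p$1 * (xco p$1 * dt v p + t * dx 1 v p)
      + xco p$2 * (xco p$2 * dt v p + t * dx 2 v p) + xco p$3 * (xco p$3 * dt v p + t * dx 3 v p)"
    by (simp add: sum_3 Lb_def t_def)
  have "s^2 = t^2 - ((xco p$1)^2 + (xco p$2)^2 + (xco p$3)^2)"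
    using sco_sq_coords[OF assms(3)] by (simp add: t_def s_def)
  then show ?thesis
    unfolding radial boosts using assms(2,3)
    by (simp add: field_simps power2_eq_square flip: t_def s_def) algebra
qed

definition ray_profile :: "(pt \<Rightarrow> real) \<Rightarrow> pt \<Rightarrow> real \<Rightarrow> real" where
  "ray_profile v e \<tau> = \<tau> powr (3/2) * v (\<tau> *\<^sub>R e)"

definition ray_profile' :: "(pt \<Rightarrow> real) \<Rightarrow> pt \<Rightarrow> real \<Rightarrow> real" where
  "ray_profile' v e \<tau> = 3/2 * \<tau> powr (1/2) * v (\<tau> *\<^sub>R e) + \<tau> powr (3/2) * pd v e (\<tau> *\<^sub>R e)"

definition ray_profile'' :: "(pt \<Rightarrow> real) \<Rightarrow> pt \<Rightarrow> real \<Rightarrow> real" where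
  "ray_profile'' v e \<tau> = 3/4 * \<tau> powr (-1/2) * v (\<tau> *\<^sub>R e) + 3 * \<tau> powr (1/2) * pd v e (\<tau> *\<^sub>R e)
     + \<tau> powr (3/2) * pd (pd v e) e (\<tau> *\<^sub>R e)"

lemma has_real_derivative_ray_profile:
  assumes "\<tau> > 0" "v differentiable (at (\<tau> *\<^sub>R e))" "pd v e differentiable (at (\<tau> *\<^sub>R e))"
  shows "(ray_profile v e has_real_derivative ray_profile' v e \<tau>) (at \<tau>)"
    and "(ray_profile' v e has_real_derivative ray_profile'' v e \<tau>) (at \<tau>)"
proof -
  note dv = has_real_derivative_pd_ray[OF assms(2)]
  note dpd = has_real_derivative_pd_ray[OF assms(3)]
  have p32: "((\<lambda>z. z powr (3/2)) has_real_derivative 3/2 * \<tau> powr (1/2)) (at \<tau>)"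
    using has_real_derivative_powr[OF assms(1), of "3/2"] by simp
  have p12: "((\<lambda>z. z powr (1/2)) has_real_derivative 1/2 * \<tau> powr (-1/2)) (at \<tau>)"
    using has_real_derivative_powr[OF assms(1), of "1/2"] by simp
  show "(ray_profile v e has_real_derivative ray_profile' v e \<tau>) (at \<tau>)"
    unfolding ray_profile_def[abs_def] ray_profile'_def
    using DERIV_mult[OF p32 dv] by (simp add: algebra_simps)
  show "(ray_profile' v e has_real_derivative ray_profile'' v e \<tau>) (at \<tau>)"
    unfolding ray_profile'_def[abs_def] ray_profile''_def
    using DERIV_add[OF DERIV_cmult[OF DERIV_mult[OF p12 dv], of "3/2"] DERIV_mult[OF p32 dpd]]
    by (simp add: algebra_simps)
qed

lemma Rhv_add_source_eq_ray_ode: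
  assumes "open U" "q \<in> U" "\<And>y. y \<in> U \<Longrightarrow> v differentiable (at y)"
    and "dt v differentiable (at q)" "\<And>a. dx a v differentiable (at q)" "tco q > 0" "sco q > 0"
    and "f q = box v q - h q * dt v q + c^2 * v q"
  defines "e \<equiv> ray_dir q" and "\<sigma> \<equiv> sco q" and "k \<equiv> tco q / sco q"
  shows "Rhv h v q + \<sigma> powr (3/2) * f q = ray_profile'' v e \<sigma> - k * h q * ray_profile' v e \<sigma>
     + c^2 * ray_profile v e \<sigma> + 3/2 * (k - 1) * h q * ray_profile v e \<sigma> / \<sigma>"
proof -
  define t where "t = tco q"
  define Hyp where "Hyp = (\<Sum>a\<in>UNIV. \<Sum>b\<in>UNIV. xco q$a * xco q$b / \<sigma>^2 * dbar a (dbar b v) q)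
        + (\<Sum>a\<in>UNIV. dbar a (dbar a v) q) + (\<Sum>a\<in>UNIV. 3 * xco q$a / \<sigma>^2 * dbar a v q)"
  define SL where "SL = (\<Sum>a\<in>UNIV. xco q$a * Lb a v q)"
  define \<phi>1 where "\<phi>1 = pd v e q"
  define \<phi>2 where "\<phi>2 = pd (pd v e) e q"
  have box: "\<phi>2 + 3 / \<sigma> * \<phi>1 = box v q + Hyp"
    using box_hyperbolic_decomposition[OF assms(1-7)] by (simp add: \<phi>1_def \<phi>2_def e_def Hyp_def \<sigma>_def)
  have dt: "dt v q = (t / \<sigma>) * \<phi>1 - SL / \<sigma>^2"
    using dt_eq_radial_minus_boosts[OF assms(3)[OF assms(2)] assms(6,7)]
    by (simp add: t_def \<sigma>_def \<phi>1_def e_def SL_def)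
  have R: "Rhv h v q = \<sigma> powr (3/2) * (Hyp + 3 / (4 * \<sigma>^2) * v q) - 3/2 * \<sigma> powr (1/2) * h q * v q
      - \<sigma> powr (1/2) * (h q / \<sigma>) * SL"
  proof -
    have "(\<Sum>a\<in>UNIV. (xco q$a / \<sigma>) * h q * Lb a v q) = (h q / \<sigma>) * SL"
      unfolding SL_def by (simp add: sum_3 add_divide_distrib algebra_simps)
    then show ?thesis unfolding Rhv_def Let_def Hyp_def \<sigma>_def by (simp add: algebra_simps)
  qed
  have q: "\<sigma> *\<^sub>R e = q" using assms(7) by (simp add: e_def \<sigma>_def ray_dir_def)
  define r where "r = sqrt \<sigma>"
  have r: "r > 0" "r^2 = \<sigma>" using assms(7) by (simp_all add: r_def \<sigma>_def)
  have pw: "\<sigma> powr (3/2) = \<sigma> * r" "\<sigma> powr (1/2) = r" "\<sigma> powr (-1/2) = inverse r"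
    using powr_halves[OF assms(7)] by (simp_all add: r_def \<sigma>_def)
  define T where "T = inverse \<sigma>"
  define Ri where "Ri = inverse r"
  have inv: "T * \<sigma> = 1" "Ri * r = 1" using assms(7) r by (simp_all add: T_def Ri_def \<sigma>_def)
  have inv2: "inverse (\<sigma>^2) = T^2" "inverse (4 * \<sigma>^2) = inverse 4 * T^2"
    by (simp_all add: T_def power_inverse)
  have "\<sigma> powr (3/2) * (Hyp + 3 / (4 * \<sigma>^2) * v q) - 3/2 * \<sigma> powr (1/2) * h q * v q
      - \<sigma> powr (1/2) * (h q / \<sigma>) * SL
      + \<sigma> powr (3/2) * (box v q - h q * ((t / \<sigma>) * \<phi>1 - SL / \<sigma>^2) + c^2 * v q)
    = (3/4 * \<sigma> powr (-1/2) * v q + 3 * \<sigma> powr (1/2) * \<phi>1 + \<sigma> powr (3/2) * \<phi>2)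
     - (t / \<sigma>) * h q * (3/2 * \<sigma> powr (1/2) * v q + \<sigma> powr (3/2) * \<phi>1)
     + c^2 * (\<sigma> powr (3/2) * v q) + 3/2 * (t / \<sigma> - 1) * h q * (\<sigma> powr (3/2) * v q) / \<sigma>"
    unfolding pw
    apply (simp only: divide_inverse inv2 flip: T_def Ri_def)
    using inv r box unfolding divide_inverse T_def[symmetric]
    by algebra
  then show ?thesis
    unfolding R assms(8) dt
    by (simp add: ray_profile_def ray_profile'_def ray_profile''_def q k_def
        flip: t_def \<sigma>_def \<phi>1_def \<phi>2_def)
qed

lemma abs_sum_coords_boosts_le:
  assumes "rco p \<le> tco p"
  shows "\<bar>\<Sum>a\<in>UNIV. xco p $ a * Lb a v p\<bar> \<le> 3 * tco p * abs1 v p"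
proof -
  have "\<bar>xco p $ a * Lb a v p\<bar> \<le> tco p * abs1 v p" for a
  proof -
    have "\<bar>xco p $ a\<bar> \<le> tco p"
      using component_le_norm_cart[of "xco p" a] assms by (simp add: rco_def xco_def)
    then show ?thesis using abs1_ge(2)[of a v p] by (simp add: abs_mult mult_mono)
  qed
  then have "(\<Sum>a\<in>UNIV. \<bar>xco p $ a * Lb a v p\<bar>) \<le> (\<Sum>a\<in>(UNIV::3 set). tco p * abs1 v p)"
    by (intro sum_mono)
  from order_trans[OF sum_abs this] show ?thesis by simp
qed

lemma weighted_dt_le_ray_profile':
  assumes "v differentiable (at p)" "tco p > 0" "sco p > 0" "rco p \<le> tco p"
  shows "(sco p / tco p) * sco p powr (3/2) * \<bar>dt v p\<bar>
    \<le> \<bar>ray_profile' v (ray_dir p) (sco p)\<bar> + 9/2 * sco p powr (1/2) * abs1 v p"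
proof -
  define t s A where "t = tco p" and "s = sco p" and "A = abs1 v p"
  define \<sigma> where "\<sigma> = sqrt s"
  define \<phi> where "\<phi> = pd v (ray_dir p) p"
  define SL where "SL = (\<Sum>a\<in>UNIV. xco p $ a * Lb a v p)"
  have pos: "0 < t" "0 < s" "0 < \<sigma>" using assms by (simp_all add: t_def s_def \<sigma>_def)
  have pw: "s powr (3/2) = s * \<sigma>" "s powr (1/2) = \<sigma>"
    using powr_halves[OF pos(2)] by (simp_all add: \<sigma>_def)
  have "s *\<^sub>R ray_dir p = p" using pos by (simp add: ray_dir_def s_def)
  then have w': "ray_profile' v (ray_dir p) s = 3/2 * \<sigma> * v p + s * \<sigma> * \<phi>"
    by (simp add: ray_profile'_def pw \<phi>_def)
  have "dt v p = (t / s) * \<phi> - SL / s^2"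
    using dt_eq_radial_minus_boosts[OF assms(1-3)] by (simp add: t_def s_def \<phi>_def SL_def)
  then have "(s/t) * (s * \<sigma>) * dt v p = (s/t) * (s * \<sigma>) * ((t / s) * \<phi> - SL / s^2)" by simp
  also have "\<dots> = s * \<sigma> * \<phi> - \<sigma> * SL / t"
    using pos by (simp add: field_simps power2_eq_square)
  finally have dt_eq: "(s/t) * (s * \<sigma>) * dt v p = s * \<sigma> * \<phi> - \<sigma> * SL / t" .
  have "(s/t) * (s * \<sigma>) * \<bar>dt v p\<bar> = \<bar>(s/t) * (s * \<sigma>) * dt v p\<bar>"
    using pos by (simp add: abs_mult)
  also have "\<dots> = \<bar>s * \<sigma> * \<phi> - \<sigma> * SL / t\<bar>" by (simp only: dt_eq)
  also have "\<dots> \<le> \<bar>s * \<sigma> * \<phi>\<bar> + \<sigma> * \<bar>SL\<bar> / t"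
    using pos abs_triangle_ineq4[of "s * \<sigma> * \<phi>" "\<sigma> * SL / t"] by (simp add: abs_mult)
  also have "\<dots> \<le> (\<bar>ray_profile' v (ray_dir p) s\<bar> + 3/2 * \<sigma> * A) + 3 * \<sigma> * A"
  proof (rule add_mono)
    have "\<bar>s * \<sigma> * \<phi>\<bar> \<le> \<bar>ray_profile' v (ray_dir p) s\<bar> + 3/2 * \<sigma> * \<bar>v p\<bar>"
      using abs_triangle_ineq4[of "ray_profile' v (ray_dir p) s" "3/2 * \<sigma> * v p"] pos
      by (simp add: w' abs_mult)
    moreover have "3/2 * \<sigma> * \<bar>v p\<bar> \<le> 3/2 * \<sigma> * A"
      by (rule mult_left_mono) (use pos abs1_ge(1)[of v p] in \<open>simp_all add: A_def\<close>)
    ultimately show "\<bar>s * \<sigma> * \<phi>\<bar> \<le> \<bar>ray_profile' v (ray_dir p) s\<bar> + 3/2 * \<sigma> * A"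
      by linarith
    show "\<sigma> * \<bar>SL\<bar> / t \<le> 3 * \<sigma> * A"
      using abs_sum_coords_boosts_le[OF assms(4), of v] pos mult_left_mono[of _ _ \<sigma>]
      by (simp add: SL_def A_def t_def field_simps)
  qed
  finally show ?thesis by (simp add: pw algebra_simps flip: s_def t_def A_def)
qed

lemma weighted_solution_le_ray_profile:
  assumes "v differentiable (at p)" "tco p > 0" "sco p > 0" "sco p \<le> tco p" "rco p \<le> tco p"
  shows "sco p powr (3/2) * (\<bar>v p\<bar> + (sco p / tco p) * absD v p)
    \<le> \<bar>ray_profile v (ray_dir p) (sco p)\<bar> + \<bar>ray_profile' v (ray_dir p) (sco p)\<bar>
      + 6 * sco p powr (1/2) * abs1 v p"
proof -
  define t s A where "t = tco p" and "s = sco p" and "A = abs1 v p"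
  define \<sigma> where "\<sigma> = sqrt s"
  have pos: "0 < t" "0 < s" "s \<le> t" "0 < \<sigma>" using assms by (simp_all add: t_def s_def \<sigma>_def)
  have pw: "s powr (3/2) = s * \<sigma>" "s powr (1/2) = \<sigma>"
    using powr_halves[OF pos(2)] by (simp_all add: \<sigma>_def)
  have A: "0 \<le> A" using abs1_ge(1)[of v p] by (simp add: A_def)
  have "s *\<^sub>R ray_dir p = p" using pos by (simp add: ray_dir_def s_def)
  then have w: "ray_profile v (ray_dir p) s = s * \<sigma> * v p" by (simp add: ray_profile_def pw)
  have "(s/t) * (s * \<sigma>) * (A / t) = (s/t)^2 * (\<sigma> * A)" by (simp add: power2_eq_square field_simps)
  also have "\<dots> \<le> \<sigma> * A"
    using pos A by (intro mult_left_le_one_le) (auto simp: power_le_one)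
  finally have "(s/t) * (s * \<sigma>) * (A / t) \<le> \<sigma> * A" .
  moreover have "(s/t) * (s * \<sigma>) * absD v p \<le> (s/t) * (s * \<sigma>) * (A / t + \<bar>dt v p\<bar>)"
    using absD_le_boosts[OF assms(2,5), of v] pos by (intro mult_left_mono) (simp_all add: A_def t_def)
  moreover have "(s/t) * (s * \<sigma>) * \<bar>dt v p\<bar> \<le> \<bar>ray_profile' v (ray_dir p) s\<bar> + 9/2 * \<sigma> * A"
    using weighted_dt_le_ray_profile'[OF assms(1-3,5), folded s_def t_def A_def] by (simp add: pw)
  moreover have "s powr (3/2) * (\<bar>v p\<bar> + (s / t) * absD v p)
      = \<bar>ray_profile v (ray_dir p) s\<bar> + (s/t) * (s * \<sigma>) * absD v p"
    unfolding w pw using pos by (simp add: abs_mult algebra_simps)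
  moreover have "0 \<le> \<sigma> * A" using pos A by simp
  ultimately have "s powr (3/2) * (\<bar>v p\<bar> + (s / t) * absD v p)
      \<le> \<bar>ray_profile v (ray_dir p) s\<bar> + \<bar>ray_profile' v (ray_dir p) s\<bar> + 6 * s powr (1/2) * A"
    unfolding pw by (simp add: distrib_left)
  then show ?thesis by (simp add: s_def t_def A_def)
qed

section \<open>Energy estimate for the ray equation\<close>

lemma damping_work_le_nonpos:
  fixes g w w' x c \<beta> :: real
  assumes "c > 0" "0 < x" "0 \<le> \<beta>" "\<beta> \<le> 3/2" "- c \<le> g" "g \<le> 0"
  shows "2 * g * (w'^2 - \<beta> * w * w' / x) \<le> 2 * (9/(16*c*x^2)) * (w'^2 + c^2 * w^2)"
proof -
  have "\<beta> * w * w' / x - w'^2 = \<beta>^2 * w^2 / (4 * x^2) - (w' - \<beta> * w / (2*x))^2"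
    using assms(2) by (simp add: power2_eq_square field_simps)
  also have "\<dots> \<le> \<beta>^2 * w^2 / (4 * x^2)" by simp
  also have "\<dots> \<le> (3/2)^2 * w^2 / (4 * x^2)"
    using assms by (intro divide_right_mono mult_right_mono power_mono) auto
  finally have square: "\<beta> * w * w' / x - w'^2 \<le> 9/16 * w^2 / x^2" by (simp add: power2_eq_square)
  have "2 * g * (w'^2 - \<beta> * w * w' / x) = 2 * (-g) * (\<beta> * w * w' / x - w'^2)"
    by (simp add: algebra_simps)
  also have "\<dots> \<le> 2 * (-g) * (9/16 * w^2 / x^2)"
    using square assms(6) by (intro mult_left_mono) auto
  also have "\<dots> \<le> 2 * c * (9/16 * w^2 / x^2)"
    using assms(5) by (intro mult_right_mono) auto
  also have "\<dots> = 2 * (9/(16*c*x^2)) * (c^2 * w^2)"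
    using assms(1,2) by (simp add: field_simps power2_eq_square)
  also have "\<dots> \<le> 2 * (9/(16*c*x^2)) * (w'^2 + c^2 * w^2)"
    using assms(1) by (intro mult_left_mono) auto
  finally show ?thesis .
qed

lemma damping_work_le_nonneg:
  fixes g w w' x a c \<beta> :: real
  assumes "c > 0" "0 < a" "a \<le> x" "0 \<le> \<beta>" "\<beta> \<le> 3/2" "0 \<le> g"
  shows "2 * g * (w'^2 - \<beta> * w * w' / x) \<le> 2 * ((1 + 3/(4*c*a)) * g) * (w'^2 + c^2 * w^2)"
proof -
  have amgm: "\<bar>w\<bar> * \<bar>w'\<bar> \<le> (c^2 * w^2 + w'^2) / (2 * c)"
  proof -
    have "0 \<le> (c * \<bar>w\<bar> - \<bar>w'\<bar>)^2" by simp
    then show ?thesis using assms(1) by (simp add: field_simps power2_eq_square algebra_simps)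
  qed
  have "- (\<beta> * w * w' / x) = \<beta> / x * (- (w * w'))" by simp
  also have "\<dots> \<le> \<beta> / x * (\<bar>w\<bar> * \<bar>w'\<bar>)"
    using assms by (intro mult_left_mono) (auto simp flip: abs_mult)
  also have "\<dots> \<le> 3 / (2 * a) * ((c^2 * w^2 + w'^2) / (2 * c))"
    using assms amgm frac_le[of "3/2" \<beta> a x] by (intro mult_mono) auto
  also have "\<dots> = 3/(4*c*a) * (w'^2 + c^2 * w^2)"
    using assms by (simp add: field_simps)
  finally have "w'^2 - \<beta> * w * w' / x \<le> w'^2 + 3/(4*c*a) * (w'^2 + c^2 * w^2)"
    by simp
  also have "\<dots> \<le> (1 + 3/(4*c*a)) * (w'^2 + c^2 * w^2)"
    by (simp add: distrib_right)
  finally have "w'^2 - \<beta> * w * w' / x \<le> (1 + 3/(4*c*a)) * (w'^2 + c^2 * w^2)" .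
  from mult_left_mono[OF this, of "2 * g"] assms(6) show ?thesis by (simp only: mult_ac)
qed

lemma damping_work_le:
  fixes g w w' x a c \<beta> :: real
  assumes "c > 0" "0 < a" "a \<le> x" "0 \<le> \<beta>" "\<beta> \<le> 3/2" "\<bar>g\<bar> \<le> c"
  shows "2 * g * (w'^2 - \<beta> * w * w' / x)
    \<le> 2 * ((1 + 3/(4*c*a)) * max g 0 + 9/(16*c*x^2)) * (w'^2 + c^2 * w^2)"
proof (cases "g \<le> 0")
  case True
  then have "2 * g * (w'^2 - \<beta> * w * w' / x) \<le> 2 * (9/(16*c*x^2)) * (w'^2 + c^2 * w^2)"
    using assms by (intro damping_work_le_nonpos) auto
  then show ?thesis using True by simp
next
  case False
  then have "2 * g * (w'^2 - \<beta> * w * w' / x) \<le> 2 * ((1 + 3/(4*c*a)) * g) * (w'^2 + c^2 * w^2)"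
    using assms by (intro damping_work_le_nonneg) auto
  moreover have "0 \<le> 2 * (9/(16*c*x^2)) * (w'^2 + c^2 * w^2)" using assms by simp
  ultimately show ?thesis using False by (simp add: distrib_left distrib_right)
qed

lemma nondecreasing_if_has_derivative_within:
  fixes f f' :: "real \<Rightarrow> real"
  assumes "\<And>x. x \<in> {a..b} \<Longrightarrow> (f has_real_derivative f' x) (at x within {a..b})"
    and "\<And>x. x \<in> {a..b} \<Longrightarrow> 0 \<le> f' x"
    and "a \<le> y" "y \<le> z" "z \<le> b"
  shows "f y \<le> f z"
proof (rule DERIV_nonneg_imp_increasing_open[OF \<open>y \<le> z\<close>])
  fix x assume x: "y < x" "x < z"
  then have "at x within {a..b} = at x" by (intro at_within_interior) (use assms in auto)
  then show "\<exists>d. (f has_real_derivative d) (at x) \<and> 0 \<le> d"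
    using assms(1,2)[of x] x assms(3-5) by auto
next
  show "continuous_on {y..z} f"
    by (rule continuous_on_subset[OF DERIV_continuous_on[OF assms(1)]]) (use assms in auto)
qed

context
  fixes E E' A \<alpha> \<rho> :: "real \<Rightarrow> real" and a b :: real
  assumes a_le_b: "a \<le> b"
    and E_deriv: "\<And>\<tau>. \<tau> \<in> {a..b} \<Longrightarrow> (E has_real_derivative E' \<tau>) (at \<tau> within {a..b})"
    and A_deriv: "\<And>\<tau>. \<tau> \<in> {a..b} \<Longrightarrow> (A has_real_derivative \<alpha> \<tau>) (at \<tau> within {a..b})"
    and E_nonneg: "\<And>\<tau>. \<tau> \<in> {a..b} \<Longrightarrow> 0 \<le> E \<tau>"
    and \<alpha>_nonneg: "\<And>\<tau>. \<tau> \<in> {a..b} \<Longrightarrow> 0 \<le> \<alpha> \<tau>"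
    and \<rho>_nonneg: "\<And>\<tau>. \<tau> \<in> {a..b} \<Longrightarrow> 0 \<le> \<rho> \<tau>"
    and \<rho>_cont: "continuous_on {a..b} \<rho>"
    and growth: "\<And>\<tau>. \<tau> \<in> {a..b} \<Longrightarrow> E' \<tau> \<le> 2 * \<alpha> \<tau> * E \<tau> + 2 * sqrt (E \<tau>) * \<rho> \<tau>"
begin

(* The square root is regularised by epsilon > 0, so that it stays differentiable where E vanishes. *)

lemma has_real_derivative_sqrt_energy:
  assumes "0 < \<epsilon>" "\<tau> \<in> {a..b}"
  shows "((\<lambda>\<tau>. sqrt (E \<tau> + \<epsilon>)) has_real_derivative E' \<tau> / (2 * sqrt (E \<tau> + \<epsilon>))) (at \<tau> within {a..b})"
proof -
  have pos: "0 < E \<tau> + \<epsilon>" using E_nonneg[OF assms(2)] assms(1) by simp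
  have "((\<lambda>\<tau>. E \<tau> + \<epsilon>) has_real_derivative E' \<tau>) (at \<tau> within {a..b})"
    using E_deriv[OF assms(2)] by (auto intro!: derivative_eq_intros)
  from DERIV_chain2[OF DERIV_real_sqrt[OF pos] this]
  have "((\<lambda>\<tau>. sqrt (E \<tau> + \<epsilon>)) has_real_derivative inverse (sqrt (E \<tau> + \<epsilon>)) / 2 * E' \<tau>)
      (at \<tau> within {a..b})"
    by simp
  moreover have "inverse (sqrt (E \<tau> + \<epsilon>)) / 2 * E' \<tau> = E' \<tau> / (2 * sqrt (E \<tau> + \<epsilon>))"
    by (simp add: field_simps)
  ultimately show ?thesis by metis
qed

lemma sqrt_energy_growth:
  assumes "0 < \<epsilon>" "\<tau> \<in> {a..b}"
  shows "E' \<tau> / (2 * sqrt (E \<tau> + \<epsilon>)) - \<alpha> \<tau> * sqrt (E \<tau> + \<epsilon>) \<le> \<rho> \<tau>"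
proof -
  define u where "u = sqrt (E \<tau> + \<epsilon>)"
  have "0 < u" "sqrt (E \<tau>) \<le> u" "E \<tau> \<le> u^2"
    using assms E_nonneg[OF assms(2)] by (simp_all add: u_def)
  then have "\<alpha> \<tau> * E \<tau> \<le> \<alpha> \<tau> * u^2" "sqrt (E \<tau>) * \<rho> \<tau> \<le> u * \<rho> \<tau>"
    using \<alpha>_nonneg[OF assms(2)] \<rho>_nonneg[OF assms(2)] by (simp_all add: mult_left_mono mult_right_mono)
  then have "E' \<tau> / (2 * u) - \<alpha> \<tau> * u \<le> \<rho> \<tau>"
    using growth[OF assms(2)] \<open>0 < u\<close> by (simp add: field_simps power2_eq_square)
  then show ?thesis by (simp add: u_def)
qed

lemma sqrt_gronwall_regularised:
  assumes "0 < \<epsilon>"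
  shows "sqrt (E b) \<le> exp (A b - A a) * (sqrt (E a) + integral {a..b} \<rho>) + exp (A b - A a) * sqrt \<epsilon>"
proof -
  define u where "u \<tau> = sqrt (E \<tau> + \<epsilon>)" for \<tau>
  define F where "F \<tau> = integral {a..\<tau>} \<rho> - exp (A a - A \<tau>) * u \<tau>" for \<tau>
  define F' where "F' \<tau> = \<rho> \<tau> - exp (A a - A \<tau>) * (E' \<tau> / (2 * u \<tau>) - \<alpha> \<tau> * u \<tau>)" for \<tau>
  have F_deriv: "(F has_real_derivative F' \<tau>) (at \<tau> within {a..b})" if "\<tau> \<in> {a..b}" for \<tau>
  proof -
    have "(u has_real_derivative E' \<tau> / (2 * u \<tau>)) (at \<tau> within {a..b})"
      unfolding u_def[abs_def] by (rule has_real_derivative_sqrt_energy[OF assms that])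
    then show ?thesis
      unfolding F_def[abs_def] F'_def
      by (auto intro!: derivative_eq_intros A_deriv that integral_has_real_derivative \<rho>_cont
          simp: algebra_simps)
  qed
  have F'_nonneg: "0 \<le> F' \<tau>" if \<tau>: "\<tau> \<in> {a..b}" for \<tau>
  proof -
    have "A a \<le> A \<tau>"
      using nondecreasing_if_has_derivative_within[OF A_deriv \<alpha>_nonneg] \<tau> by auto
    have "exp (A a - A \<tau>) * (E' \<tau> / (2 * u \<tau>) - \<alpha> \<tau> * u \<tau>) \<le> exp (A a - A \<tau>) * \<rho> \<tau>"
      using sqrt_energy_growth[OF assms \<tau>] by (simp add: u_def mult_left_mono)
    also have "\<dots> \<le> \<rho> \<tau>"
      using \<open>A a \<le> A \<tau>\<close> \<rho>_nonneg[OF \<tau>] mult_right_mono[of "exp (A a - A \<tau>)" 1 "\<rho> \<tau>"] by simp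
    finally show ?thesis by (simp add: F'_def)
  qed
  have "F a \<le> F b"
    using nondecreasing_if_has_derivative_within[OF F_deriv F'_nonneg] a_le_b by auto
  then have "u b \<le> exp (A b - A a) * (u a + integral {a..b} \<rho>)"
    by (simp add: F_def exp_diff field_simps)
  moreover have "sqrt (E b) \<le> u b" using assms by (simp add: u_def)
  moreover have "u a \<le> sqrt (E a) + sqrt \<epsilon>"
    using sqrt_add_le_add_sqrt[of "E a" \<epsilon>] E_nonneg[of a] a_le_b assms by (simp add: u_def)
  ultimately show ?thesis
    by (smt (verit) exp_gt_zero mult_left_mono distrib_left)
qed

lemma sqrt_gronwall: "sqrt (E b) \<le> exp (A b - A a) * (sqrt (E a) + integral {a..b} \<rho>)"
proof (rule field_le_epsilon)
  fix d :: real assume "d > 0"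
  define Z where "Z = exp (A b - A a)"
  have "Z > 0" by (simp add: Z_def)
  then have "Z * sqrt ((d / Z)^2) = d" using \<open>d > 0\<close> by simp
  then show "sqrt (E b) \<le> exp (A b - A a) * (sqrt (E a) + integral {a..b} \<rho>) + d"
    using sqrt_gronwall_regularised[of "(d / Z)^2"] \<open>d > 0\<close> \<open>Z > 0\<close> by (simp add: Z_def)
qed

end

lemma energy_derivative_le:
  fixes w w' w'' g G \<tau> :: real
  assumes "c > 0" "0 < a" "a \<le> \<tau>" "0 \<le> \<beta>" "\<beta> \<le> 3/2" "\<bar>g\<bar> \<le> c"
    and "G = w'' - g * w' + c^2 * w + \<beta> * g * w / \<tau>"
  shows "2 * w' * w'' + c^2 * (2 * w * w')
    \<le> 2 * ((1 + 3/(4*c*a)) * max g 0 + 9/(16*c*\<tau>^2)) * (w'^2 + c^2 * w^2)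
      + 2 * sqrt (w'^2 + c^2 * w^2) * \<bar>G\<bar>"
proof -
  have "2 * w' * w'' + c^2 * (2 * w * w') = 2 * g * (w'^2 - \<beta> * w * w' / \<tau>) + 2 * w' * G"
    using assms(2,3) by (simp add: assms(7) field_simps power2_eq_square)
  moreover have "2 * g * (w'^2 - \<beta> * w * w' / \<tau>)
      \<le> 2 * ((1 + 3/(4*c*a)) * max g 0 + 9/(16*c*\<tau>^2)) * (w'^2 + c^2 * w^2)"
    by (rule damping_work_le[OF assms(1-6)])
  moreover have "w' * G \<le> sqrt (w'^2 + c^2 * w^2) * \<bar>G\<bar>"
  proof -
    have "w' * G \<le> \<bar>w'\<bar> * \<bar>G\<bar>" by (simp flip: abs_mult)
    also have "\<dots> \<le> sqrt (w'^2 + c^2 * w^2) * \<bar>G\<bar>"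
      by (rule mult_right_mono, rule real_le_rsqrt) (simp_all add: power2_abs)
    finally show ?thesis .
  qed
  ultimately show ?thesis by linarith
qed

lemma damped_ode_energy_estimate:
  fixes w w' w'' g G :: "real \<Rightarrow> real"
  assumes "0 < a" "a \<le> b" "c > 0" "0 \<le> \<beta>" "\<beta> \<le> 3/2"
    and w_deriv: "\<And>\<tau>. \<tau> \<in> {a..b} \<Longrightarrow> (w has_real_derivative w' \<tau>) (at \<tau>)"
    and w'_deriv: "\<And>\<tau>. \<tau> \<in> {a..b} \<Longrightarrow> (w' has_real_derivative w'' \<tau>) (at \<tau>)"
    and w''_cont: "continuous_on {a..b} w''" and g_cont: "continuous_on {a..b} g"
    and g_bound: "\<And>\<tau>. \<tau> \<in> {a..b} \<Longrightarrow> \<bar>g \<tau>\<bar> \<le> c"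
    and ode: "\<And>\<tau>. \<tau> \<in> {a..b} \<Longrightarrow> G \<tau> = w'' \<tau> - g \<tau> * w' \<tau> + c^2 * w \<tau> + \<beta> * g \<tau> * w \<tau> / \<tau>"
    and g_int: "integral {a..b} (\<lambda>\<tau>. max (g \<tau>) 0) \<le> M"
  shows "sqrt ((w' b)^2 + c^2 * (w b)^2) \<le> exp ((1 + 3/(4*c*a)) * M + 9/(16*c*a))
           * (sqrt ((w' a)^2 + c^2 * (w a)^2) + integral {a..b} (\<lambda>\<tau>. \<bar>G \<tau>\<bar>))"
proof -
  define K where "K = 1 + 3/(4*c*a)"
  define gp where "gp \<tau> = max (g \<tau>) 0" for \<tau>
  define E where "E \<tau> = (w' \<tau>)^2 + c^2 * (w \<tau>)^2" for \<tau>
  define A where "A \<tau> = K * integral {a..\<tau>} gp - 9/(16*c*\<tau>)" for \<tau>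
  define \<alpha> where "\<alpha> \<tau> = K * gp \<tau> + 9/(16*c*\<tau>^2)" for \<tau>
  have K_pos: "K > 0" using assms by (simp add: K_def add_pos_pos)
  have w_cont: "continuous_on {a..b} w" "continuous_on {a..b} w'"
    using DERIV_continuous_on has_field_derivative_at_within w_deriv w'_deriv by blast+
  have gp_cont: "continuous_on {a..b} gp" unfolding gp_def by (intro continuous_intros g_cont)
  have ode_rhs_cont: "continuous_on {a..b} (\<lambda>\<tau>. w'' \<tau> - g \<tau> * w' \<tau> + c^2 * w \<tau> + \<beta> * g \<tau> * w \<tau> / \<tau>)"
    using \<open>0 < a\<close> by (intro continuous_intros w_cont w''_cont g_cont) auto
  have G_cont: "continuous_on {a..b} (\<lambda>\<tau>. \<bar>G \<tau>\<bar>)"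
    by (rule continuous_on_rabs, rule continuous_on_cong[THEN iffD1, OF refl _ ode_rhs_cont]) (simp add: ode)
  have "sqrt (E b) \<le> exp (A b - A a) * (sqrt (E a) + integral {a..b} (\<lambda>\<tau>. \<bar>G \<tau>\<bar>))"
  proof (rule sqrt_gronwall[where E' = "\<lambda>\<tau>. 2 * w' \<tau> * w'' \<tau> + c^2 * (2 * w \<tau> * w' \<tau>)" and \<alpha> = \<alpha>])
    fix \<tau> assume \<tau>: "\<tau> \<in> {a..b}"
    then have "\<tau> > 0" using \<open>0 < a\<close> by simp
    have "(E has_real_derivative 2 * w' \<tau> * w'' \<tau> + c^2 * (2 * w \<tau> * w' \<tau>)) (at \<tau>)"
      unfolding E_def[abs_def] using w_deriv[OF \<tau>] w'_deriv[OF \<tau>] by (auto intro!: derivative_eq_intros)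
    then show "(E has_real_derivative 2 * w' \<tau> * w'' \<tau> + c^2 * (2 * w \<tau> * w' \<tau>)) (at \<tau> within {a..b})"
      by (rule has_field_derivative_at_within)
    have "((\<lambda>\<tau>. 9/(16*c*\<tau>)) has_real_derivative - (9/(16*c*\<tau>^2))) (at \<tau> within {a..b})"
      using \<open>\<tau> > 0\<close> \<open>c > 0\<close> by (auto intro!: derivative_eq_intros simp: power2_eq_square field_simps)
    from DERIV_diff[OF DERIV_cmult[OF integral_has_real_derivative[OF gp_cont \<tau>], of K] this]
    show "(A has_real_derivative \<alpha> \<tau>) (at \<tau> within {a..b})"
      by (simp add: A_def[abs_def] \<alpha>_def)
    show "0 \<le> \<alpha> \<tau>" using K_pos \<open>c > 0\<close> by (simp add: \<alpha>_def gp_def)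
    show "2 * w' \<tau> * w'' \<tau> + c^2 * (2 * w \<tau> * w' \<tau>) \<le> 2 * \<alpha> \<tau> * E \<tau> + 2 * sqrt (E \<tau>) * \<bar>G \<tau>\<bar>"
      using energy_derivative_le[OF \<open>c > 0\<close> \<open>0 < a\<close> _ \<open>0 \<le> \<beta>\<close> \<open>\<beta> \<le> 3/2\<close> g_bound[OF \<tau>] ode[OF \<tau>]] \<tau>
      by (simp add: \<alpha>_def E_def K_def gp_def)
  qed (use \<open>a \<le> b\<close> G_cont in \<open>auto simp: E_def\<close>)
  also have "\<dots> \<le> exp (K * M + 9/(16*c*a)) * (sqrt (E a) + integral {a..b} (\<lambda>\<tau>. \<bar>G \<tau>\<bar>))"
  proof (rule mult_right_mono)
    have "K * integral {a..b} gp \<le> K * M" using g_int K_pos by (simp add: gp_def[abs_def])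
    moreover have "9/(16*c*b) \<ge> 0" using assms by simp
    moreover have "A b - A a = K * integral {a..b} gp + 9/(16*c*a) - 9/(16*c*b)" by (simp add: A_def)
    ultimately have "A b - A a \<le> K * M + 9/(16*c*a)" by linarith
    then show "exp (A b - A a) \<le> exp (K * M + 9/(16*c*a))" by simp
    show "0 \<le> sqrt (E a) + integral {a..b} (\<lambda>\<tau>. \<bar>G \<tau>\<bar>)"
      using G_cont by (auto intro!: add_nonneg_nonneg integral_nonneg integrable_continuous_real
          simp: E_def)
  qed
  finally show ?thesis by (simp add: E_def K_def)
qed

definition ray_energy :: "real \<Rightarrow> (pt \<Rightarrow> real) \<Rightarrow> pt \<Rightarrow> real \<Rightarrow> real" where
  "ray_energy c v e \<tau> = sqrt ((ray_profile' v e \<tau>)^2 + c^2 * (ray_profile v e \<tau>)^2)"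

lemma abs_ray_profiles_le_ray_energy:
  assumes "0 < c"
  shows "\<bar>ray_profile v e \<tau>\<bar> + \<bar>ray_profile' v e \<tau>\<bar> \<le> (1 + 1/c) * ray_energy c v e \<tau>"
proof -
  have "\<bar>ray_profile' v e \<tau>\<bar> \<le> ray_energy c v e \<tau>"
    unfolding ray_energy_def by (rule real_le_rsqrt) (simp add: power2_abs)
  moreover have "c * \<bar>ray_profile v e \<tau>\<bar> \<le> ray_energy c v e \<tau>"
    unfolding ray_energy_def using assms
    by (intro real_le_rsqrt) (simp add: power2_abs power_mult_distrib abs_mult)
  then have "\<bar>ray_profile v e \<tau>\<bar> \<le> ray_energy c v e \<tau> / c" using assms by (simp add: field_simps)
  moreover have "(1 + 1/c) * ray_energy c v e \<tau> = ray_energy c v e \<tau> + ray_energy c v e \<tau> / c"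
    by (simp add: algebra_simps)
  ultimately show ?thesis by linarith
qed

section \<open>Solutions in the hyperboloidal region\<close>

definition ray_source :: "(pt \<Rightarrow> real) \<Rightarrow> (pt \<Rightarrow> real) \<Rightarrow> (pt \<Rightarrow> real) \<Rightarrow> pt \<Rightarrow> real \<Rightarrow> real" where
  "ray_source h v f p \<tau> = Rhv h v (gam p \<tau>) + \<tau> powr (3/2) * f (gam p \<tau>)"

definition growth_factor :: "real \<Rightarrow> real \<Rightarrow> real \<Rightarrow> real" where
  "growth_factor c C_S s0 = exp ((1 + 3 / (4 * c * s0)) * max C_S 0 + 9 / (16 * c * s0))"

definition initial_factor :: "real \<Rightarrow> real \<Rightarrow> real" where
  "initial_factor c s0 = s0 * sqrt s0 * (2 + 4 * s0 + c)"

definition kg_constant :: "real \<Rightarrow> real \<Rightarrow> real \<Rightarrow> real" where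
  "kg_constant c C_S s0 = (1 + 1/c) * growth_factor c C_S s0 * (initial_factor c s0 + 1) + 6"

lemma exp_le_growth_factor:
  assumes "0 < c" "0 < s0" "s0 \<le> a"
  shows "exp ((1 + 3/(4 * c * a)) * max C_S 0 + 9/(16 * c * a)) \<le> growth_factor c C_S s0"
proof -
  have "3/(4 * c * a) \<le> 3/(4 * c * s0)" "9/(16 * c * a) \<le> 9/(16 * c * s0)"
    using assms by (simp_all add: frac_le)
  then have "(1 + 3/(4 * c * a)) * max C_S 0 \<le> (1 + 3/(4 * c * s0)) * max C_S 0"
    by (intro mult_right_mono) auto
  with \<open>9/(16 * c * a) \<le> 9/(16 * c * s0)\<close> show ?thesis by (simp add: growth_factor_def)
qed

lemma kg_constant_absorbs:
  assumes "0 < c" "0 < s0" "0 \<le> D" "0 \<le> A" "0 \<le> I"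
  shows "(1 + 1/c) * growth_factor c C_S s0 * (initial_factor c s0 * D + I) + 6 * A
    \<le> kg_constant c C_S s0 * (D + A + I)"
proof -
  define Y where "Y = (1 + 1/c) * growth_factor c C_S s0"
  have "0 \<le> Y" "0 \<le> initial_factor c s0"
    using assms by (simp_all add: Y_def growth_factor_def initial_factor_def)
  with assms have "0 \<le> Y * D" "0 \<le> Y * initial_factor c s0 * A" "0 \<le> Y * A"
    "0 \<le> Y * initial_factor c s0 * I"
    by simp_all
  moreover have "kg_constant c C_S s0 = Y * (initial_factor c s0 + 1) + 6"
    by (simp add: kg_constant_def Y_def)
  ultimately show ?thesis
    unfolding Y_def[symmetric] using assms by (simp add: algebra_simps)
qed

lemma Vbd_eq:
  assumes "p \<in> Kreg s0 s1" "0 < s0" "s0 \<le> s1"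
  shows "Vbd s0 eta h v f p = (sco p / tco p) powr eta
    * ((if cone_param p \<le> s0 then (SUP q\<in>HypK s0. \<bar>v q\<bar> + absD v q) else 0)
       + sco p powr (1/2) * abs1 v p + integral {lam0 s0 p..sco p} (\<lambda>\<tau>. \<bar>ray_source h v f p \<tau>\<bar>))"
  unfolding Vbd_def Let_def lam0_eq_max(1)[OF assms] by (simp add: ray_source_def algebra_simps)

locale kg_solution =
  fixes c s0 s1 \<delta> :: real and U :: "pt set" and v h f :: "pt \<Rightarrow> real"
  assumes c_pos: "0 < c" and s0_gt_1: "1 < s0" and s0_less_s1: "s0 < s1"
    and Kreg_subset: "Kreg s0 s1 \<subseteq> U" and v_C2: "C2_on U v" and h_cont: "continuous_on U h"
    and \<delta>_pos: "0 < \<delta>"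
    and v_vanishes: "\<And>p. p \<in> Kreg s0 s1 \<Longrightarrow> tco p - 1 - \<delta> < rco p \<Longrightarrow> v p = 0"
    and kg_equation: "\<And>p. p \<in> Kreg s0 s1 \<Longrightarrow> box v p - h p * dt v p + c^2 * v p = f p"
    and h_bound: "\<And>p. p \<in> Kreg s0 s1 \<Longrightarrow> \<bar>(tco p / sco p) * h p\<bar> \<le> c"
begin

lemma s0_pos: "0 < s0" and s0_le_s1: "s0 \<le> s1"
  using s0_gt_1 s0_less_s1 by simp_all

lemma pd_v_vanishes_near_cone:
  assumes "q \<in> HypK s0" "tco q - rco q < 1 + \<delta>/2"
  shows "pd v d q = 0"
proof -
  have "v y = 0" if "y \<in> cone_layer s0 s1 \<delta>" for y
    using v_vanishes[OF subsetD[OF cone_layer_subset_Kreg that]] that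
    by (simp add: cone_layer_def tco_def rco_def)
  then have zero: "pd v d y = 0" if "y \<in> cone_layer s0 s1 \<delta>" for y
    using pd_cong_open[OF open_cone_layer that, of v "\<lambda>_. 0"] by (simp add: pd_def)
  have "\<forall>\<^sub>F y in at_right 0. pd v d (q + y *\<^sub>R et) = 0"
    using eventually_time_shift_in_cone_layer[OF assms \<delta>_pos less_imp_le[OF s0_pos] s0_less_s1]
    by eventually_elim (rule zero)
  then have "((\<lambda>y. pd v d (q + y *\<^sub>R et)) \<longlongrightarrow> 0) (at_right 0)"
    by (rule tendsto_eventually)
  moreover have "q \<in> U"
    using assms(1) HypK_subset_Kreg[OF less_imp_le[OF s0_pos] s0_le_s1] Kreg_subset by blast
  then have "isCont (pd v d) q"
    using C2_onD(5)[OF v_C2] continuous_on_eq_continuous_at[OF C2_onD(1)[OF v_C2]] by blast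
  then have "((\<lambda>y. pd v d (q + y *\<^sub>R et)) \<longlongrightarrow> pd v d q) (at_right 0)"
    by (auto intro!: isCont_tendsto_compose[of _ "pd v d"] tendsto_eq_intros)
  ultimately show ?thesis using tendsto_unique[OF trivial_limit_at_right_real] by blast
qed

lemma hyperboloid_data_bounded: "bdd_above ((\<lambda>q. \<bar>v q\<bar> + absD v q) ` HypK s0)"
proof -
  define K where "K = {q::pt. fst q = sqrt (s0^2 + (norm (snd q))^2) \<and> 1 + \<delta>/2 \<le> fst q - norm (snd q)}"
  have "compact K" unfolding K_def by (rule compact_hyperboloid_away_from_cone) (use \<delta>_pos in simp)
  have HypK_Kreg: "HypK s0 \<subseteq> Kreg s0 s1" using HypK_subset_Kreg s0_pos s0_le_s1 by simp
  have "K \<subseteq> HypK s0" using \<delta>_pos by (auto simp: K_def HypK_def)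
  define \<psi> where "\<psi> q = \<bar>v q\<bar> + \<bar>dt v q\<bar> + (\<Sum>a\<in>UNIV. \<bar>dx a v q\<bar>)" for q
  have "continuous_on U \<psi>" unfolding \<psi>_def[abs_def] dt_def dx_def
    by (intro continuous_intros C2_onD[OF v_C2])
  then have "compact (\<psi> ` K)"
    using \<open>compact K\<close> \<open>K \<subseteq> HypK s0\<close> HypK_Kreg Kreg_subset
    by (intro compact_continuous_image) (auto elim!: continuous_on_subset)
  then obtain B where "\<forall>y\<in>\<psi> ` K. norm y \<le> B" using compact_imp_bounded bounded_iff by metis
  then have B: "\<psi> q \<le> B" if "q \<in> K" for q using that by fastforce
  show ?thesis
  proof (rule bdd_aboveI[of _ "max B 0"], clarify)
    fix q assume q: "q \<in> HypK s0"
    show "\<bar>v q\<bar> + absD v q \<le> max B 0"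
    proof (cases "1 + \<delta>/2 \<le> tco q - rco q")
      case True
      then have "q \<in> K" using q by (auto simp: K_def HypK_def tco_def rco_def)
      then show ?thesis using B[of q] absD_le_sum[of v q] by (simp add: \<psi>_def)
    next
      case False
      then have "tco q - 1 - \<delta> < rco q" using \<delta>_pos by linarith
      then have "v q = 0" using v_vanishes q HypK_Kreg by blast
      moreover have "absD v q \<le> 0"
        using absD_le_sum[of v q] pd_v_vanishes_near_cone[OF q] False by (simp add: dt_def dx_def)
      ultimately show ?thesis by simp
    qed
  qed
qed

lemma hyperboloid_data_nonneg: "0 \<le> (SUP q\<in>HypK s0. \<bar>v q\<bar> + absD v q)"
proof -
  have "(s0, 0) \<in> HypK s0" using s0_gt_1 by (simp add: HypK_def)
  then have "\<bar>v (s0, 0)\<bar> + absD v (s0, 0) \<le> (SUP q\<in>HypK s0. \<bar>v q\<bar> + absD v q)"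
    by (rule cSUP_upper[OF _ hyperboloid_data_bounded])
  then show ?thesis using absD_ge(1)[of v "(s0, 0)"] by linarith
qed

lemma ray_source_eq_ray_ode:
  assumes p: "p \<in> Kreg s0 s1" and "0 < \<tau>" "gam p \<tau> \<in> Kreg s0 s1"
  defines "g \<equiv> tco p / sco p * h (gam p \<tau>)"
  shows "ray_source h v f p \<tau> = ray_profile'' v (ray_dir p) \<tau> - g * ray_profile' v (ray_dir p) \<tau>
    + c^2 * ray_profile v (ray_dir p) \<tau> + 3/2 * (1 - sco p / tco p) * g * ray_profile v (ray_dir p) \<tau> / \<tau>"
proof -
  note K = Kreg_coords[OF p s0_pos s0_le_s1]
  note G = gam_coords[OF K(5) \<open>0 < \<tau>\<close>]
  define q where "q = gam p \<tau>"
  have q: "q \<in> U" "0 < tco q" "sco q = \<tau>" "ray_dir q = ray_dir p" "tco q / sco q = tco p / sco p"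
    using assms(3) Kreg_subset Kreg_coords[OF assms(3) s0_pos s0_le_s1] G K \<open>0 < \<tau>\<close>
    by (auto simp: q_def)
  have "Rhv h v q + sco q powr (3/2) * f q = ray_profile'' v (ray_dir q) (sco q)
     - tco q / sco q * h q * ray_profile' v (ray_dir q) (sco q) + c^2 * ray_profile v (ray_dir q) (sco q)
     + 3/2 * (tco q / sco q - 1) * h q * ray_profile v (ray_dir q) (sco q) / sco q"
    by (rule Rhv_add_source_eq_ray_ode[OF C2_onD(1)[OF v_C2] q(1) C2_onD(2)[OF v_C2] _ _ q(2)])
      (use C2_onD(3)[OF v_C2 q(1)] kg_equation[OF assms(3), folded q_def] \<open>0 < \<tau>\<close> in
        \<open>simp_all add: dt_def dx_def q\<close>)
  note ode = this[unfolded q(5), unfolded q(3,4)]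
  have coeff: "3/2 * (tco p / sco p - 1) * h q = 3/2 * (1 - sco p / tco p) * (tco p / sco p * h q)"
    using K by (simp add: field_simps)
  have "ray_source h v f p \<tau> = Rhv h v q + \<tau> powr (3/2) * f q" by (simp add: ray_source_def q_def)
  also note ode
  finally show ?thesis using coeff by (simp only: g_def q_def)
qed

lemma ray_profile_regular:
  assumes p: "p \<in> Kreg s0 s1" and a: "s0 \<le> a" "cone_param p < a"
  shows "\<And>\<tau>. \<tau> \<in> {a..sco p} \<Longrightarrow>
      (ray_profile v (ray_dir p) has_real_derivative ray_profile' v (ray_dir p) \<tau>) (at \<tau>)"
    and "\<And>\<tau>. \<tau> \<in> {a..sco p} \<Longrightarrow>
      (ray_profile' v (ray_dir p) has_real_derivative ray_profile'' v (ray_dir p) \<tau>) (at \<tau>)"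
    and "continuous_on {a..sco p} (ray_profile'' v (ray_dir p))"
    and "continuous_on {a..sco p} (\<lambda>\<tau>. h (gam p \<tau>))"
proof -
  have pos: "0 < \<tau>" if "\<tau> \<in> {a..sco p}" for \<tau> using that a s0_pos by simp
  have ray: "gam p \<tau> = \<tau> *\<^sub>R ray_dir p" for \<tau> by (simp add: gam_def ray_dir_def)
  have in_U: "\<tau> *\<^sub>R ray_dir p \<in> U" if "\<tau> \<in> {a..sco p}" for \<tau>
    using gam_in_Kreg[OF p s0_pos s0_le_s1, of \<tau>] that a Kreg_subset by (auto simp: ray)
  show "(ray_profile v (ray_dir p) has_real_derivative ray_profile' v (ray_dir p) \<tau>) (at \<tau>)"
    "(ray_profile' v (ray_dir p) has_real_derivative ray_profile'' v (ray_dir p) \<tau>) (at \<tau>)"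
    if "\<tau> \<in> {a..sco p}" for \<tau>
    using has_real_derivative_ray_profile[OF pos[OF that] C2_onD(2)[OF v_C2 in_U[OF that]]
        C2_onD(3)[OF v_C2 in_U[OF that]]] by blast+
  have ray_cont: "continuous_on {a..sco p} (\<lambda>\<tau>. \<tau> *\<^sub>R ray_dir p)" by (intro continuous_intros)
  have "(\<lambda>\<tau>. \<tau> *\<^sub>R ray_dir p) ` {a..sco p} \<subseteq> U" using in_U by auto
  note compose = continuous_on_compose2[OF _ ray_cont this]
  have "continuous_on {a..sco p} (\<lambda>\<tau>. v (\<tau> *\<^sub>R ray_dir p))"
    by (rule compose[OF C2_onD(4)[OF v_C2]])
  moreover have "continuous_on {a..sco p} (\<lambda>\<tau>. pd v (ray_dir p) (\<tau> *\<^sub>R ray_dir p))"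
    by (rule compose[OF C2_onD(5)[OF v_C2]])
  moreover have "continuous_on {a..sco p} (\<lambda>\<tau>. pd (pd v (ray_dir p)) (ray_dir p) (\<tau> *\<^sub>R ray_dir p))"
    by (rule compose[OF C2_onD(6)[OF v_C2]])
  ultimately show "continuous_on {a..sco p} (ray_profile'' v (ray_dir p))"
    unfolding ray_profile''_def[abs_def] using a s0_pos by (auto intro!: continuous_intros)
  show "continuous_on {a..sco p} (\<lambda>\<tau>. h (gam p \<tau>))"
    unfolding ray by (rule compose[OF h_cont])
qed

lemma continuous_on_ray_source:
  assumes p: "p \<in> Kreg s0 s1" and a: "s0 \<le> a" "cone_param p < a"
  shows "continuous_on {a..sco p} (ray_source h v f p)"
proof -
  note R = ray_profile_regular[OF assms]
  define k where "k = tco p / sco p"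
  have "continuous_on {a..sco p} (ray_profile v (ray_dir p))"
    by (rule DERIV_continuous_on) (use R(1) has_field_derivative_at_within in blast)
  moreover have "continuous_on {a..sco p} (ray_profile' v (ray_dir p))"
    by (rule DERIV_continuous_on) (use R(2) has_field_derivative_at_within in blast)
  moreover have "continuous_on {a..sco p} (\<lambda>\<tau>. 1 / \<tau>)"
    using a s0_pos by (intro continuous_on_divide continuous_on_const continuous_on_id) auto
  ultimately have cont: "continuous_on {a..sco p} (\<lambda>\<tau>. ray_profile'' v (ray_dir p) \<tau>
      - k * h (gam p \<tau>) * ray_profile' v (ray_dir p) \<tau> + c^2 * ray_profile v (ray_dir p) \<tau>
      + 3/2 * (1 - sco p / tco p) * (k * h (gam p \<tau>)) * ray_profile v (ray_dir p) \<tau> * (1 / \<tau>))"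
    by (intro continuous_on_add continuous_on_diff continuous_on_mult continuous_on_const R(3,4))
  show ?thesis
  proof (rule continuous_on_cong[THEN iffD1, OF refl _ cont])
    fix \<tau> assume "\<tau> \<in> {a..sco p}"
    then have "0 < \<tau>" "gam p \<tau> \<in> Kreg s0 s1"
      using a s0_pos gam_in_Kreg[OF p s0_pos s0_le_s1, of \<tau>] by auto
    from ray_source_eq_ray_ode[OF p this]
    show "ray_profile'' v (ray_dir p) \<tau> - k * h (gam p \<tau>) * ray_profile' v (ray_dir p) \<tau>
      + c^2 * ray_profile v (ray_dir p) \<tau>
      + 3/2 * (1 - sco p / tco p) * (k * h (gam p \<tau>)) * ray_profile v (ray_dir p) \<tau> * (1 / \<tau>)
      = ray_source h v f p \<tau>"
      by (simp add: k_def)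
  qed
qed

lemma integral_abs_ray_source_nonneg:
  assumes "p \<in> Kreg s0 s1" "s0 \<le> a" "cone_param p < a"
  shows "0 \<le> integral {a..sco p} (\<lambda>\<tau>. \<bar>ray_source h v f p \<tau>\<bar>)"
  using continuous_on_ray_source[OF assms]
  by (intro integral_nonneg integrable_continuous_real continuous_on_rabs) auto

lemma damping_integral_le:
  assumes p: "p \<in> Kreg s0 s1" and a: "s0 \<le> a" "cone_param p < a"
    and S_h: "\<And>q. q \<in> Kreg s0 s1 \<Longrightarrow> S q + (tco q / sco q) * h q \<le> 0"
    and S_int: "(\<lambda>l. \<bar>S (gam p l)\<bar>) integrable_on {lam0 s0 p .. s1}"
      "integral {lam0 s0 p .. s1} (\<lambda>l. \<bar>S (gam p l)\<bar>) \<le> C_S"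
  shows "integral {a..sco p} (\<lambda>\<tau>. max (tco p / sco p * h (gam p \<tau>)) 0) \<le> C_S"
proof -
  note K = Kreg_coords[OF p s0_pos s0_le_s1]
  have sub: "{a..sco p} \<subseteq> {lam0 s0 p .. s1}"
    using a K lam0_eq_max(2)[OF p s0_pos s0_le_s1] by auto
  have "max (tco p / sco p * h (gam p \<tau>)) 0 \<le> \<bar>S (gam p \<tau>)\<bar>" if "\<tau> \<in> {a..sco p}" for \<tau>
  proof -
    have "0 < \<tau>" "gam p \<tau> \<in> Kreg s0 s1"
      using that a s0_pos gam_in_Kreg[OF p s0_pos s0_le_s1, of \<tau>] by auto
    then show ?thesis
      using S_h[of "gam p \<tau>"] gam_coords[OF K(5), of \<tau>] by auto
  qed
  moreover have "(\<lambda>\<tau>. max (tco p / sco p * h (gam p \<tau>)) 0) integrable_on {a..sco p}"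
    by (intro integrable_continuous_real continuous_intros ray_profile_regular(4)[OF p a])
  ultimately have "integral {a..sco p} (\<lambda>\<tau>. max (tco p / sco p * h (gam p \<tau>)) 0)
      \<le> integral {a..sco p} (\<lambda>\<tau>. \<bar>S (gam p \<tau>)\<bar>)"
    by (intro integral_le integrable_subinterval_real[OF S_int(1) sub])
  also have "\<dots> \<le> integral {lam0 s0 p .. s1} (\<lambda>\<tau>. \<bar>S (gam p \<tau>)\<bar>)"
    by (rule integral_subset_le[OF sub integrable_subinterval_real[OF S_int(1) sub] S_int(1)]) auto
  finally show ?thesis using S_int(2) by linarith
qed

lemma ray_energy_growth:
  assumes p: "p \<in> Kreg s0 s1" and a: "s0 \<le> a" "cone_param p < a" "a \<le> sco p"
    and S_h: "\<And>q. q \<in> Kreg s0 s1 \<Longrightarrow> S q + (tco q / sco q) * h q \<le> 0"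
    and S_int: "(\<lambda>l. \<bar>S (gam p l)\<bar>) integrable_on {lam0 s0 p .. s1}"
      "integral {lam0 s0 p .. s1} (\<lambda>l. \<bar>S (gam p l)\<bar>) \<le> C_S"
  shows "ray_energy c v (ray_dir p) (sco p)
    \<le> growth_factor c C_S s0 * (ray_energy c v (ray_dir p) a + integral {a..sco p} (\<lambda>\<tau>. \<bar>ray_source h v f p \<tau>\<bar>))"
proof -
  note K = Kreg_coords[OF p s0_pos s0_le_s1]
  note R = ray_profile_regular[OF p a(1,2)]
  define k where "k = tco p / sco p"
  have k: "1 \<le> k" using K by (simp add: k_def)
  have in_K: "0 < \<tau>" "gam p \<tau> \<in> Kreg s0 s1" if "\<tau> \<in> {a..sco p}" for \<tau>
    using that a s0_pos gam_in_Kreg[OF p s0_pos s0_le_s1, of \<tau>] by auto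
  have "ray_energy c v (ray_dir p) (sco p) \<le> exp ((1 + 3/(4 * c * a)) * max C_S 0 + 9/(16 * c * a))
     * (ray_energy c v (ray_dir p) a + integral {a..sco p} (\<lambda>\<tau>. \<bar>ray_source h v f p \<tau>\<bar>))"
    unfolding ray_energy_def
  proof (rule damped_ode_energy_estimate[where w'' = "ray_profile'' v (ray_dir p)"
        and g = "\<lambda>\<tau>. k * h (gam p \<tau>)" and \<beta> = "3/2 * (1 - 1/k)"])
    show "0 < a" "a \<le> sco p" "0 < c" using a s0_pos c_pos by auto
    show "0 \<le> 3/2 * (1 - 1/k)" "3/2 * (1 - 1/k) \<le> 3/2" using k by (auto simp: field_simps)
    show "continuous_on {a..sco p} (\<lambda>\<tau>. k * h (gam p \<tau>))"
      by (intro continuous_intros R(4))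
    show "integral {a..sco p} (\<lambda>\<tau>. max (k * h (gam p \<tau>)) 0) \<le> max C_S 0"
      using damping_integral_le[OF p a(1,2) S_h S_int] by (simp add: k_def)
    fix \<tau> assume \<tau>: "\<tau> \<in> {a..sco p}"
    have "tco (gam p \<tau>) / sco (gam p \<tau>) = k"
      using gam_coords[OF K(5) in_K(1)[OF \<tau>]] in_K(1)[OF \<tau>] by (simp add: k_def)
    then show "\<bar>k * h (gam p \<tau>)\<bar> \<le> c" using h_bound[OF in_K(2)[OF \<tau>]] by simp
    show "ray_source h v f p \<tau> = ray_profile'' v (ray_dir p) \<tau> - k * h (gam p \<tau>) * ray_profile' v (ray_dir p) \<tau>
      + c^2 * ray_profile v (ray_dir p) \<tau> + 3/2 * (1 - 1/k) * (k * h (gam p \<tau>)) * ray_profile v (ray_dir p) \<tau> / \<tau>"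
      using ray_source_eq_ray_ode[OF p in_K[OF \<tau>]] by (simp add: k_def)
  qed (use R(1-3) in auto)
  also have "\<dots> \<le> growth_factor c C_S s0
     * (ray_energy c v (ray_dir p) a + integral {a..sco p} (\<lambda>\<tau>. \<bar>ray_source h v f p \<tau>\<bar>))"
  proof (rule mult_right_mono)
    show "exp ((1 + 3/(4 * c * a)) * max C_S 0 + 9/(16 * c * a)) \<le> growth_factor c C_S s0"
      using exp_le_growth_factor c_pos s0_pos a(1) by blast
    show "0 \<le> ray_energy c v (ray_dir p) a + integral {a..sco p} (\<lambda>\<tau>. \<bar>ray_source h v f p \<tau>\<bar>)"
      using integral_abs_ray_source_nonneg[OF p a(1,2)] by (simp add: ray_energy_def)
  qed
  finally show ?thesis .
qed

lemma ray_energy_on_hyperboloid: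
  assumes p: "p \<in> Kreg s0 s1" and "cone_param p < s0"
  shows "ray_energy c v (ray_dir p) s0 \<le> initial_factor c s0 * (SUP q\<in>HypK s0. \<bar>v q\<bar> + absD v q)"
proof -
  note K = Kreg_coords[OF p s0_pos s0_le_s1]
  define q where "q = gam p s0"
  have "q \<in> U"
    using gam_in_Kreg[OF p s0_pos s0_le_s1, of s0] assms K Kreg_subset by (auto simp: q_def)
  have data: "\<bar>v q\<bar> + absD v q \<le> (SUP q\<in>HypK s0. \<bar>v q\<bar> + absD v q)"
    using cSUP_upper[OF gam_in_HypK[OF p s0_pos s0_le_s1 assms(2)] hyperboloid_data_bounded]
    by (simp add: q_def)
  have "\<bar>pd v (ray_dir p) q\<bar> \<le> 4 * norm (ray_dir p) * absD v q"
    by (rule abs_pd_le_absD[OF C2_onD(2)[OF v_C2 \<open>q \<in> U\<close>]])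
  also have "\<dots> \<le> 4 * s0 * absD v q"
    using norm_ray_dir_le_cone_param[OF K(5,8,2)] K(1) assms(2) absD_ge(1)[of v q]
    by (intro mult_right_mono) auto
  finally have pd: "\<bar>pd v (ray_dir p) q\<bar> \<le> 4 * s0 * absD v q" .
  define \<sigma> where "\<sigma> = sqrt s0"
  have \<sigma>: "0 < \<sigma>" "s0 powr (3/2) = s0 * \<sigma>" "s0 powr (1/2) = \<sigma>"
    using s0_pos powr_halves[OF s0_pos] by (simp_all add: \<sigma>_def)
  have "s0 *\<^sub>R ray_dir p = q" by (simp add: q_def gam_def ray_dir_def)
  then have w: "ray_profile v (ray_dir p) s0 = s0 * \<sigma> * v q"
    "ray_profile' v (ray_dir p) s0 = 3/2 * \<sigma> * v q + s0 * \<sigma> * pd v (ray_dir p) q"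
    by (simp_all add: ray_profile_def ray_profile'_def \<sigma>)
  define V D where "V = \<bar>v q\<bar>" and "D = absD v q"
  have VD: "0 \<le> V" "0 \<le> D" using absD_ge(1)[of v q] by (simp_all add: V_def D_def)
  have "ray_energy c v (ray_dir p) s0 \<le> \<bar>ray_profile' v (ray_dir p) s0\<bar> + \<bar>c * ray_profile v (ray_dir p) s0\<bar>"
    unfolding ray_energy_def
    using sqrt_sum_squares_le_sum_abs[of "ray_profile' v (ray_dir p) s0" "c * ray_profile v (ray_dir p) s0"]
    by (simp add: power_mult_distrib)
  also have "\<dots> \<le> (3/2 * \<sigma> * V + s0 * \<sigma> * (4 * s0 * D)) + c * (s0 * \<sigma> * V)"
    unfolding w V_def D_def using \<sigma> s0_pos c_pos pd abs_triangle_ineq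
    by (intro add_mono) (auto simp: abs_mult intro!: order_trans[OF abs_triangle_ineq] add_mono mult_left_mono)
  also have "\<dots> \<le> initial_factor c s0 * (V + D)"
  proof -
    have "3/2 * \<sigma> * V \<le> 2 * s0 * \<sigma> * V" using s0_gt_1 \<sigma> VD by (intro mult_right_mono) auto
    moreover have "0 \<le> s0 * \<sigma> * D" "0 \<le> s0 * s0 * \<sigma> * V" "0 \<le> c * s0 * \<sigma> * D"
      using s0_pos \<sigma> VD c_pos by simp_all
    ultimately show ?thesis by (simp add: initial_factor_def \<sigma>_def[symmetric] algebra_simps)
  qed
  also have "\<dots> \<le> initial_factor c s0 * (SUP q\<in>HypK s0. \<bar>v q\<bar> + absD v q)"
    using data s0_pos c_pos by (intro mult_left_mono) (auto simp: V_def D_def initial_factor_def)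
  finally show ?thesis .
qed

lemma ray_vanishes_near_cone:
  assumes p: "p \<in> Kreg s0 s1" and "s0 \<le> cone_param p"
  obtains b where "cone_param p < b" "b \<le> sco p"
    "\<And>\<tau>. cone_param p < \<tau> \<Longrightarrow> \<tau> < b \<Longrightarrow> ray_profile v (ray_dir p) \<tau> = 0
       \<and> ray_profile' v (ray_dir p) \<tau> = 0 \<and> ray_source h v f p \<tau> = 0"
proof -
  note K = Kreg_coords[OF p s0_pos s0_le_s1]
  define l where "l = cone_param p"
  define b where "b = min ((1 + \<delta>) * l) (sco p)"
  have "1 < tco p - rco p" using K by simp
  have l: "0 < l" "l < sco p" using cone_param_bounds[OF p s0_pos s0_le_s1] by (simp_all add: l_def)
  then have "l < b" using \<delta>_pos by (simp add: b_def)
  have in_K: "0 < \<tau>" "gam p \<tau> \<in> Kreg s0 s1" if "l < \<tau>" "\<tau> < b" for \<tau>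
    using that l assms(2) gam_in_Kreg[OF p s0_pos s0_le_s1, of \<tau>] by (auto simp: l_def b_def)
  have ray: "gam p \<tau> = \<tau> *\<^sub>R ray_dir p" for \<tau> by (simp add: gam_def ray_dir_def)
  have v0: "v (\<tau> *\<^sub>R ray_dir p) = 0" if "l < \<tau>" "\<tau> < b" for \<tau>
  proof -
    have "\<tau> < (1 + \<delta>) * l" using that by (simp add: b_def)
    then have "\<tau> * (tco p - rco p) < (1 + \<delta>) * sco p"
      using \<open>1 < tco p - rco p\<close> by (simp add: l_def cone_param_def field_simps)
    then have "\<tau> * (tco p - rco p) / sco p < 1 + \<delta>" using K(5) by (simp add: divide_less_eq)
    then have "tco (gam p \<tau>) - rco (gam p \<tau>) < 1 + \<delta>"
      using gam_coords(6)[OF K(5) in_K(1)[OF that]] by simp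
    then show ?thesis using v_vanishes[OF in_K(2)[OF that]] by (simp add: ray)
  qed
  have in_U: "\<tau> *\<^sub>R ray_dir p \<in> U" if "l < \<tau>" "\<tau> < b" for \<tau>
    using in_K(2)[OF that] Kreg_subset by (auto simp: ray)
  have pd0: "pd v (ray_dir p) (\<tau> *\<^sub>R ray_dir p) = 0" if "l < \<tau>" "\<tau> < b" for \<tau>
    by (rule has_real_derivative_locally_zero[OF
          has_real_derivative_pd_ray[OF C2_onD(2)[OF v_C2 in_U[OF that]]] that v0])
  have pd_pd0: "pd (pd v (ray_dir p)) (ray_dir p) (\<tau> *\<^sub>R ray_dir p) = 0" if "l < \<tau>" "\<tau> < b" for \<tau>
    by (rule has_real_derivative_locally_zero[OF
          has_real_derivative_pd_ray[OF C2_onD(3)[OF v_C2 in_U[OF that]]] that pd0])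
  show ?thesis
  proof (rule that[of b])
    show "cone_param p < b" "b \<le> sco p" using \<open>l < b\<close> by (simp_all add: l_def b_def)
    fix \<tau> assume "cone_param p < \<tau>" "\<tau> < b"
    then have "l < \<tau>" "\<tau> < b" by (simp_all add: l_def)
    then show "ray_profile v (ray_dir p) \<tau> = 0 \<and> ray_profile' v (ray_dir p) \<tau> = 0 \<and> ray_source h v f p \<tau> = 0"
      using ray_source_eq_ray_ode[OF p in_K[OF \<open>l < \<tau>\<close> \<open>\<tau> < b\<close>]] v0 pd0 pd_pd0
      by (simp add: ray_profile_def ray_profile'_def ray_profile''_def)
  qed
qed

lemma ray_start_point:
  assumes p: "p \<in> Kreg s0 s1"
  obtains a where "s0 \<le> a" "cone_param p < a" "a \<le> sco p"
    "integral {lam0 s0 p..sco p} (\<lambda>\<tau>. \<bar>ray_source h v f p \<tau>\<bar>)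
      = integral {a..sco p} (\<lambda>\<tau>. \<bar>ray_source h v f p \<tau>\<bar>)"
    "ray_energy c v (ray_dir p) a
      \<le> initial_factor c s0 * (if cone_param p \<le> s0 then (SUP q\<in>HypK s0. \<bar>v q\<bar> + absD v q) else 0)"
proof (cases "cone_param p < s0")
  case True
  then show ?thesis
    using that[of s0] ray_energy_on_hyperboloid[OF p True] Kreg_coords(4)[OF p s0_pos s0_le_s1]
      lam0_eq_max(2)[OF p s0_pos s0_le_s1] by auto
next
  case False
  define l where "l = cone_param p"
  obtain b where b: "l < b" "b \<le> sco p"
    and zero: "\<And>\<tau>. l < \<tau> \<Longrightarrow> \<tau> < b \<Longrightarrow> ray_profile v (ray_dir p) \<tau> = 0
       \<and> ray_profile' v (ray_dir p) \<tau> = 0 \<and> ray_source h v f p \<tau> = 0"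
    using ray_vanishes_near_cone[OF p] False unfolding l_def by (metis not_less)
  define a where "a = (l + b) / 2"
  have a: "s0 \<le> a" "l < a" "a < b" "a \<le> sco p" using b False by (auto simp: a_def l_def)
  have "lam0 s0 p = l" using lam0_eq_max(2)[OF p s0_pos s0_le_s1] False by (simp add: l_def)
  have "((\<lambda>\<tau>. \<bar>ray_source h v f p \<tau>\<bar>) has_integral 0) {l..a}"
    by (rule has_integral_spike_finite[of "{l}" _ _ "\<lambda>_. 0"]) (use a zero in auto)
  moreover have "(\<lambda>\<tau>. \<bar>ray_source h v f p \<tau>\<bar>) integrable_on {a..sco p}"
    using continuous_on_ray_source[OF p a(1) a(2)[unfolded l_def]]
    by (intro integrable_continuous_real continuous_on_rabs)
  ultimately have "((\<lambda>\<tau>. \<bar>ray_source h v f p \<tau>\<bar>) has_integral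
      0 + integral {a..sco p} (\<lambda>\<tau>. \<bar>ray_source h v f p \<tau>\<bar>)) {l..sco p}"
    using a by (intro has_integral_combine[of l a "sco p"] integrable_integral) auto
  then have "integral {l..sco p} (\<lambda>\<tau>. \<bar>ray_source h v f p \<tau>\<bar>)
      = integral {a..sco p} (\<lambda>\<tau>. \<bar>ray_source h v f p \<tau>\<bar>)"
    by (simp add: integral_unique)
  moreover have "ray_energy c v (ray_dir p) a = 0" using zero[OF a(2,3)] by (simp add: ray_energy_def)
  moreover have "0 \<le> initial_factor c s0" using s0_pos c_pos by (simp add: initial_factor_def)
  ultimately show ?thesis
    using that[of a] a \<open>lam0 s0 p = l\<close> hyperboloid_data_nonneg by (auto simp: l_def)
qed

lemma pointwise_bound:
  assumes p: "p \<in> Kreg s0 s1"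
    and S_h: "\<And>q. q \<in> Kreg s0 s1 \<Longrightarrow> S q + (tco q / sco q) * h q \<le> 0"
    and S_int: "(\<lambda>l. \<bar>S (gam p l)\<bar>) integrable_on {lam0 s0 p .. s1}"
      "integral {lam0 s0 p .. s1} (\<lambda>l. \<bar>S (gam p l)\<bar>) \<le> C_S"
  shows "(sco p / tco p) powr eta * sco p powr (3/2) * (\<bar>v p\<bar> + (sco p / tco p) * absD v p)
    \<le> kg_constant c C_S s0 * Vbd s0 eta h v f p"
proof -
  note K = Kreg_coords[OF p s0_pos s0_le_s1]
  define e where "e = ray_dir p"
  define D where "D = (if cone_param p \<le> s0 then (SUP q\<in>HypK s0. \<bar>v q\<bar> + absD v q) else 0)"
  define I where "I = integral {lam0 s0 p..sco p} (\<lambda>\<tau>. \<bar>ray_source h v f p \<tau>\<bar>)"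
  define A where "A = sco p powr (1/2) * abs1 v p"
  obtain a where a: "s0 \<le> a" "cone_param p < a" "a \<le> sco p"
    and I_a: "I = integral {a..sco p} (\<lambda>\<tau>. \<bar>ray_source h v f p \<tau>\<bar>)"
    and E_a: "ray_energy c v e a \<le> initial_factor c s0 * D"
    using ray_start_point[OF p] unfolding I_def D_def e_def by blast
  have nonneg: "0 \<le> D" "0 \<le> A" "0 \<le> I"
    using hyperboloid_data_nonneg abs1_ge(1)[of v p] integral_abs_ray_source_nonneg[OF p a(1,2)]
    by (simp_all add: D_def A_def I_a)
  have "0 \<le> (1 + 1/c) * growth_factor c C_S s0" using c_pos by (simp add: growth_factor_def)
  have "p \<in> U" using p Kreg_subset by blast
  have "sco p powr (3/2) * (\<bar>v p\<bar> + (sco p / tco p) * absD v p)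
      \<le> \<bar>ray_profile v e (sco p)\<bar> + \<bar>ray_profile' v e (sco p)\<bar> + 6 * sco p powr (1/2) * abs1 v p"
    unfolding e_def by (rule weighted_solution_le_ray_profile[OF C2_onD(2)[OF v_C2 \<open>p \<in> U\<close>]]) (use K in auto)
  also have "\<dots> \<le> (1 + 1/c) * ray_energy c v e (sco p) + 6 * A"
    using abs_ray_profiles_le_ray_energy[OF c_pos, of v e "sco p"] by (simp add: A_def)
  also have "\<dots> \<le> (1 + 1/c) * growth_factor c C_S s0 * (ray_energy c v e a + I) + 6 * A"
    using mult_left_mono[OF ray_energy_growth[OF p a S_h S_int], of "1 + 1/c"] c_pos
    by (simp add: e_def I_a mult.assoc)
  also have "\<dots> \<le> (1 + 1/c) * growth_factor c C_S s0 * (initial_factor c s0 * D + I) + 6 * A"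
    using E_a \<open>0 \<le> (1 + 1/c) * growth_factor c C_S s0\<close> by (simp add: mult_left_mono)
  also have "\<dots> \<le> kg_constant c C_S s0 * (D + A + I)"
    by (rule kg_constant_absorbs[OF c_pos s0_pos nonneg])
  finally have bound: "sco p powr (3/2) * (\<bar>v p\<bar> + (sco p / tco p) * absD v p)
      \<le> kg_constant c C_S s0 * (D + A + I)" .
  show ?thesis
    unfolding Vbd_eq[OF p s0_pos s0_le_s1] D_def[symmetric] A_def[symmetric] I_def[symmetric]
    using mult_left_mono[OF bound, of "(sco p / tco p) powr eta"] by (simp add: mult_ac)
qed

end

theorem proposition3p4:
  fixes c C_S s0 :: real
  assumes "c > 0" and "s0 \<ge> 2"
  shows "\<exists>C. \<forall>(s1::real) (eta::real) (h::pt \<Rightarrow> real) (v::pt \<Rightarrow> real) (f::pt \<Rightarrow> real)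
              (S::pt \<Rightarrow> real) (U::pt set).
     s1 > s0
     \<and> Kreg s0 s1 \<subseteq> U \<and> C2_on U v \<and> C2_on U h
     \<and> (\<exists>\<delta>>0. \<forall>p\<in>Kreg s0 s1. rco p > tco p - 1 - \<delta> \<longrightarrow> v p = 0)
     \<and> (\<forall>p\<in>Kreg s0 s1. box v p - h p * dt v p + c^2 * v p = f p)
     \<and> (\<forall>p\<in>Kreg s0 s1. \<bar>(tco p / sco p) * h p\<bar> \<le> c)
     \<and> (\<forall>p\<in>Kreg s0 s1. S p + (tco p / sco p) * h p \<le> 0)
     \<and> (\<forall>p\<in>Kreg s0 s1. (\<lambda>l. \<bar>S (gam p l)\<bar>) integrable_on {lam0 s0 p .. s1}
            \<and> integral {lam0 s0 p .. s1} (\<lambda>l. \<bar>S (gam p l)\<bar>) \<le> C_S)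
     \<longrightarrow> (\<forall>p\<in>Kreg s0 s1.
            (sco p / tco p) powr eta * sco p powr (3/2)
              * (\<bar>v p\<bar> + (sco p / tco p) * absD v p)
            \<le> C * Vbd s0 eta h v f p)"
proof (intro exI[of _ "kg_constant c C_S s0"] allI impI ballI, elim conjE exE)
  fix s1 eta h v f S U \<delta> and p :: pt
  assume "s0 < s1" "Kreg s0 s1 \<subseteq> U" "C2_on U v" "C2_on U h" "0 < \<delta>"
    "\<forall>p\<in>Kreg s0 s1. tco p - 1 - \<delta> < rco p \<longrightarrow> v p = 0"
    "\<forall>p\<in>Kreg s0 s1. box v p - h p * dt v p + c^2 * v p = f p"
    "\<forall>p\<in>Kreg s0 s1. \<bar>(tco p / sco p) * h p\<bar> \<le> c"
    and S: "\<forall>p\<in>Kreg s0 s1. S p + (tco p / sco p) * h p \<le> 0"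
      "\<forall>p\<in>Kreg s0 s1. (\<lambda>l. \<bar>S (gam p l)\<bar>) integrable_on {lam0 s0 p .. s1}
            \<and> integral {lam0 s0 p .. s1} (\<lambda>l. \<bar>S (gam p l)\<bar>) \<le> C_S"
    and p: "p \<in> Kreg s0 s1"
  then interpret kg_solution c s0 s1 \<delta> U v h f
    using assms by unfold_locales (auto intro: C2_onD(4))
  show "(sco p / tco p) powr eta * sco p powr (3/2) * (\<bar>v p\<bar> + (sco p / tco p) * absD v p)
      \<le> kg_constant c C_S s0 * Vbd s0 eta h v f p"
    using pointwise_bound[OF p] S p by blast
qed

end
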